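(* Let $r^\star_0\in(r^\star_{3M},\pi/2)$. There exists $C=C(M,k,r^\star_0)>0$ such that for all sufficiently large $\ell$, $$\int_{r^\star_{3M}}^{r^\star_0}\big((R_{\mathrm{QM},\ell}')^2+\ell(\ell+1)R_{\mathrm{QM},\ell}^2\big)\,dr^\star\le Ce^{-C^{-1}\ell}\int_{r^\star_{3M}}^{\pi/2}\big((R_{\mathrm{QM},\ell}')^2+\ell(\ell+1)R_{\mathrm{QM},\ell}^2\big)\,dr^\star.$$
   Context: Fix $M>0$, $k>0$; $\Delta(r)=r^2+k^2r^4-2Mr$, $w:=\Delta/r^4$, viewed as a function of $r^\star$ defined by $dr^\star/dr=r^2/\Delta$, $r^\star(r=+\infty)=\pi/2$; $r^\star_{3M}=r^\star(r=3M)$; prime is $d/dr^\star$. For $\ell\ge2$, $\omega_\ell^2$ is the lowest eigenvalue and $R_{\mathrm{QM},\ell}$ a corresponding real eigenfunction (equivalently a minimiser of the quotient below) of the problem $\omega^2R=-R''+w(\ell(\ell+1)-\frac{6M}{r})R$ on $[r^\star_{3M},\pi/2]$, $R(r^\star_{3M})=0$, $(-2\omega^2R+\frac{\ell(\ell+1)(\ell(\ell+1)-2)}{6M}R'+k^2\ell(\ell+1)R)(\pi/2)=0$, where $$\omega_\ell^2=\inf_{R\in H^1_0((r^\star_{3M},\pi/2])\setminus\{0\}}\frac{\int_{r^\star_{3M}}^{\pi/2}\big((R')^2+w(\ell(\ell+1)-\frac{6M}{r})R^2\big)dr^\star+\frac{6Mk^2}{\ell(\ell+1)-2}R(\frac\pi2)^2}{\int_{r^\star_{3M}}^{\pi/2}R^2\,dr^\star+\frac{12M}{\ell(\ell+1)(\ell(\ell+1)-2)}R(\frac\pi2)^2},$$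 $H^1_0((r^\star_{3M},\pi/2])$ being the $H^1$-closure of smooth functions compactly supported in $(r^\star_{3M},\pi/2]$. *)

theory Defs
  imports "HOL-Analysis.Analysis"
begin

definition Delta :: "real \<Rightarrow> real \<Rightarrow> real \<Rightarrow> real" where
  "Delta M k r = r^2 + k^2 * r^4 - 2 * M * r"

text \<open>Tortoise coordinate r*(r) with dr*/dr = r^2/Delta and r*(+infinity) = pi/2,
  i.e. r*(r) = pi/2 - integral from r to infinity of s^2/Delta(s) ds (used for r >= 3M).\<close>
definition rstar :: "real \<Rightarrow> real \<Rightarrow> real \<Rightarrow> real" where
  "rstar M k r = pi / 2 - integral {r..} (\<lambda>s. s^2 / Delta M k s)"

definition r_of :: "real \<Rightarrow> real \<Rightarrow> real \<Rightarrow> real" where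
  "r_of M k x = (THE r. 3 * M \<le> r \<and> rstar M k r = x)"

text \<open>w = Delta / r^4 as a function of r*; at r* = pi/2 (r = infinity) its limit k^2.\<close>
definition wstar :: "real \<Rightarrow> real \<Rightarrow> real \<Rightarrow> real" where
  "wstar M k x = (if x < pi / 2 then Delta M k (r_of M k x) / (r_of M k x)^4 else k^2)"

text \<open>6M/r as a function of r*; at r* = pi/2 (r = infinity) its limit 0.\<close>
definition sixM_over_r :: "real \<Rightarrow> real \<Rightarrow> real \<Rightarrow> real" where
  "sixM_over_r M k x = (if x < pi / 2 then 6 * M / r_of M k x else 0)"

definition Vpot :: "real \<Rightarrow> real \<Rightarrow> nat \<Rightarrow> real \<Rightarrow> real" where
  "Vpot M k l x = wstar M k x * (real (l * (l + 1)) - sixM_over_r M k x)"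

definition QM_num :: "real \<Rightarrow> real \<Rightarrow> nat \<Rightarrow> (real \<Rightarrow> real) \<Rightarrow> real" where
  "QM_num M k l R =
     integral {rstar M k (3 * M) .. pi / 2} (\<lambda>x. (deriv R x)^2 + Vpot M k l x * (R x)^2)
     + 6 * M * k^2 / (real (l * (l + 1)) - 2) * (R (pi / 2))^2"

definition QM_den :: "real \<Rightarrow> real \<Rightarrow> nat \<Rightarrow> (real \<Rightarrow> real) \<Rightarrow> real" where
  "QM_den M k l R =
     integral {rstar M k (3 * M) .. pi / 2} (\<lambda>x. (R x)^2)
     + 12 * M / (real (l * (l + 1)) * (real (l * (l + 1)) - 2)) * (R (pi / 2))^2"

text \<open>Admissible trial functions: C^1 on [r*_3M, pi/2], vanishing at r*_3M, nonzero there.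
  (This dense class has the same infimum as H^1_0((r*_3M, pi/2]); minimisers over H^1_0
  are smooth, hence the minimisers coincide.)\<close>
definition QM_admissible :: "real \<Rightarrow> real \<Rightarrow> (real \<Rightarrow> real) \<Rightarrow> bool" where
  "QM_admissible M k R \<longleftrightarrow>
     R C1_differentiable_on {rstar M k (3 * M) .. pi / 2}
     \<and> R (rstar M k (3 * M)) = 0
     \<and> (\<exists>x\<in>{rstar M k (3 * M) .. pi / 2}. R x \<noteq> 0)"

text \<open>R_QM,l: a real minimiser of the Rayleigh quotient (lowest eigenfunction).\<close>
definition is_R_QM :: "real \<Rightarrow> real \<Rightarrow> nat \<Rightarrow> (real \<Rightarrow> real) \<Rightarrow> bool" where
  "is_R_QM M k l R \<longleftrightarrow>
     QM_admissible M k R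
     \<and> (\<forall>S. QM_admissible M k S \<longrightarrow>
            QM_num M k l R / QM_den M k l R \<le> QM_num M k l S / QM_den M k l S)"

end

theory Submission
  imports Defs
begin

text \<open>Testing the minimality of \<open>R\<close> against \<open>R + t E\<close> gives the weak Euler--Lagrange equation
  with eigenvalue \<open>q = \<omega>\<^sup>2\<close>. Trial functions \<open>(r\<^sup>\<star> - r\<^sup>\<star>\<^sub>3\<^sub>M)\<^sup>n\<close>, which concentrate where \<open>w\<close> is close
  to its infimum \<open>k\<^sup>2\<close>, show \<open>q \<le> (k\<^sup>2 + 2\<epsilon>) \<ell>(\<ell>+1) + O(1)\<close>, whereas near the photon sphere
  \<open>w \<ge> k\<^sup>2 + 4\<epsilon>\<close>; so there the potential exceeds \<open>q\<close> by a margin of order \<open>\<epsilon> \<ell>(\<ell>+1)\<close>.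
  An Agmon estimate (testing the equation against \<open>exp (2\<mu>(x\<^sub>1 - r\<^sup>\<star>)) R\<close> with
  \<open>\<mu>\<^sup>2 = \<epsilon> \<ell>(\<ell>+1)/4\<close> and completing the square) then bounds the energy of \<open>R\<close> on
  \<open>[r\<^sup>\<star>\<^sub>3\<^sub>M, r\<^sub>0]\<close> by \<open>exp (-2\<mu>(x\<^sub>1 - r\<^sub>0))\<close> times its total energy.\<close>

abbreviation rstar_3M :: "real \<Rightarrow> real \<Rightarrow> real" where
  "rstar_3M M k \<equiv> rstar M k (3 * M)"

abbreviation QM_interval :: "real \<Rightarrow> real \<Rightarrow> real set" where
  "QM_interval M k \<equiv> {rstar_3M M k .. pi / 2}"

section \<open>The tortoise coordinate\<close>

lemma Delta_bounds:
  assumes "M > 0" "k > 0" "3 * M \<le> s"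
  shows "k^2 * s^4 \<le> Delta M k s" "Delta M k s \<le> s^2 + k^2 * s^4" "Delta M k s > 0"
proof -
  have "0 \<le> s * (s - 2 * M)" using assms by auto
  then show "k^2 * s^4 \<le> Delta M k s"
    unfolding Delta_def by (simp add: algebra_simps power2_eq_square)
  moreover have "k^2 * s^4 > 0" using assms by simp
  ultimately show "Delta M k s > 0" by linarith
  show "Delta M k s \<le> s^2 + k^2 * s^4" unfolding Delta_def using assms by simp
qed

definition tortoise_density :: "real \<Rightarrow> real \<Rightarrow> real \<Rightarrow> real" where
  "tortoise_density M k s = s^2 / Delta M k s"

lemma tortoise_density_bounds:
  assumes "M > 0" "k > 0" "3 * M \<le> s"
  shows "tortoise_density M k s \<le> 1 / k^2 * s powr -2"
    "1 / (1 + k^2 * s^2) \<le> tortoise_density M k s"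
    "0 < tortoise_density M k s"
proof -
  have s: "s > 0" using assms by simp
  note D = Delta_bounds[OF assms]
  have "s^2 / Delta M k s \<le> s^2 / (k^2 * s^4)"
    using D s assms by (intro divide_left_mono) auto
  also have "\<dots> = 1 / k^2 * (1 / s^2)"
    using s by (simp add: field_simps power2_eq_square power4_eq_xxxx)
  also have "1 / s^2 = s powr -2"
    using s by (simp add: powr_minus powr_realpow divide_inverse)
  finally show "tortoise_density M k s \<le> 1 / k^2 * s powr -2" unfolding tortoise_density_def .
  have "Delta M k s \<le> s^2 * (1 + k^2 * s^2)"
    using D(2) by (simp add: algebra_simps power4_eq_xxxx power2_eq_square)
  then have "s^2 / (s^2 * (1 + k^2 * s^2)) \<le> s^2 / Delta M k s"
    by (rule divide_left_mono) (use D(3) s in \<open>auto intro!: mult_pos_pos add_pos_nonneg\<close>)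
  then show "1 / (1 + k^2 * s^2) \<le> tortoise_density M k s"
    unfolding tortoise_density_def using s by simp
  show "0 < tortoise_density M k s" unfolding tortoise_density_def using D s by simp
qed

lemma continuous_on_tortoise_density:
  assumes "M > 0" "k > 0"
  shows "continuous_on {3 * M..} (tortoise_density M k)"
proof -
  have "Delta M k s \<noteq> 0" if "s \<in> {3 * M..}" for s
    using Delta_bounds(3)[OF assms] that by fastforce
  then show ?thesis
    unfolding tortoise_density_def[abs_def] Delta_def by (intro continuous_intros) auto
qed

lemma tortoise_density_integrable_on_Icc:
  assumes "M > 0" "k > 0" "3 * M \<le> r"
  shows "tortoise_density M k integrable_on {r..s}"
  by (rule integrable_continuous_interval, rule continuous_on_subset[OF continuous_on_tortoise_density])
     (use assms in auto)

lemma tortoise_density_integral_tail: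
  assumes "M > 0" "k > 0" "3 * M \<le> r"
  shows "tortoise_density M k integrable_on {r..}"
    "0 \<le> integral {r..} (tortoise_density M k)"
    "integral {r..} (tortoise_density M k) \<le> 1 / (k^2 * r)"
proof -
  have r: "r > 0" using assms by simp
  have "((\<lambda>x. x powr -2) has_integral 1 / r) {r..}"
    using has_integral_powr_to_inf[of "-2" r] r by (simp add: powr_minus divide_inverse)
  from has_integral_mult_right[OF this, of "1 / k^2"]
  have majorant: "((\<lambda>x. 1 / k^2 * x powr -2) has_integral 1 / (k^2 * r)) {r..}"
    by simp
  have bounds: "0 < tortoise_density M k x" "tortoise_density M k x \<le> 1 / k^2 * x powr -2"
    if "x \<in> {r..}" for x
    using tortoise_density_bounds[OF assms(1,2)] that assms by auto
  have "tortoise_density M k \<in> borel_measurable (lebesgue_on {r..})"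
    by (rule continuous_imp_measurable_on_sets_lebesgue, rule continuous_on_subset[OF continuous_on_tortoise_density])
       (use assms in auto)
  moreover have "{r..} \<in> sets lebesgue"
    by (metis borel_closed closed_atLeast sets_completionI_sets sets_lborel)
  moreover have "\<bar>tortoise_density M k x\<bar> \<le> 1 / k^2 * x powr -2" if "x \<in> {r..}" for x
    using bounds[OF that] by simp
  ultimately show int: "tortoise_density M k integrable_on {r..}"
    using measurable_bounded_by_integrable_imp_integrable_real has_integral_integrable[OF majorant] by blast
  show "0 \<le> integral {r..} (tortoise_density M k)"
    by (rule integral_nonneg[OF int]) (meson bounds(1) less_imp_le)
  have "integral {r..} (tortoise_density M k) \<le> integral {r..} (\<lambda>x. 1 / k^2 * x powr -2)"
    by (rule integral_le[OF int has_integral_integrable[OF majorant]]) (use bounds(2) in blast)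
  then show "integral {r..} (tortoise_density M k) \<le> 1 / (k^2 * r)"
    using integral_unique[OF majorant] by simp
qed

lemma rstar_eq_tortoise_integral: "rstar M k r = pi / 2 - integral {r..} (tortoise_density M k)"
  unfolding rstar_def tortoise_density_def by simp

lemma rstar_diff:
  assumes "M > 0" "k > 0" "3 * M \<le> r" "r \<le> s"
  shows "rstar M k s - rstar M k r = integral {r..s} (tortoise_density M k)"
proof -
  have "(tortoise_density M k has_integral integral {r..s} (tortoise_density M k)) {r..s}"
    by (intro integrable_integral tortoise_density_integrable_on_Icc assms)
  moreover have "(tortoise_density M k has_integral integral {s..} (tortoise_density M k)) {s..}"
    by (intro integrable_integral tortoise_density_integral_tail(1)) (use assms in auto)
  moreover have "negligible ({r..s} \<inter> {s..})" by (rule negligible_subset[of "{s}"]) auto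
  ultimately have "(tortoise_density M k has_integral
          integral {r..s} (tortoise_density M k) + integral {s..} (tortoise_density M k)) ({r..s} \<union> {s..})"
    by (rule has_integral_Un)
  moreover have "{r..s} \<union> {s..} = {r..}" using assms by auto
  ultimately show ?thesis
    unfolding rstar_eq_tortoise_integral by (simp add: integral_unique)
qed

lemma rstar_strict_mono:
  assumes "M > 0" "k > 0" "3 * M \<le> r" "r < s"
  shows "rstar M k r < rstar M k s"
proof -
  define c where "c = 1 / (1 + k^2 * s^2)"
  have "c \<le> tortoise_density M k x" if "x \<in> {r..s}" for x
  proof -
    have "x^2 \<le> s^2" using that assms by (intro power_mono) auto
    then have "k^2 * x^2 \<le> k^2 * s^2" by (rule mult_left_mono) simp
    then have "c \<le> 1 / (1 + k^2 * x^2)"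
      unfolding c_def by (intro divide_left_mono) (auto intro!: mult_pos_pos add_pos_nonneg)
    also have "\<dots> \<le> tortoise_density M k x" using tortoise_density_bounds(2)[OF assms(1,2)] that assms by simp
    finally show ?thesis .
  qed
  then have "integral {r..s} (\<lambda>x. c) \<le> integral {r..s} (tortoise_density M k)"
    by (intro integral_le tortoise_density_integrable_on_Icc) (use assms in auto)
  moreover have "0 < integral {r..s} (\<lambda>x. c)"
    using assms by (simp add: c_def add_pos_nonneg)
  moreover have "rstar M k s - rstar M k r = integral {r..s} (tortoise_density M k)"
    using rstar_diff[OF assms(1-3)] assms(4) by simp
  ultimately show ?thesis by linarith
qed

lemma rstar_le_iff:
  assumes "M > 0" "k > 0" "3 * M \<le> r" "3 * M \<le> s"
  shows "rstar M k r \<le> rstar M k s \<longleftrightarrow> r \<le> s"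
proof
  assume "rstar M k r \<le> rstar M k s"
  then show "r \<le> s" using rstar_strict_mono[OF assms(1,2,4), of r] by (meson linorder_not_le)
next
  assume "r \<le> s"
  then show "rstar M k r \<le> rstar M k s" using rstar_strict_mono[OF assms(1,2,3), of s] by (cases "r = s") auto
qed

lemma rstar_less_pi_half:
  assumes "M > 0" "k > 0" "3 * M \<le> r"
  shows "rstar M k r < pi / 2"
  using rstar_strict_mono[OF assms, of "r + 1"] tortoise_density_integral_tail(2)[OF assms(1,2), of "r + 1"] assms
  unfolding rstar_eq_tortoise_integral[of M k "r + 1"] by simp

lemma rstar_3M_less_pi_half: "M > 0 \<Longrightarrow> k > 0 \<Longrightarrow> rstar_3M M k < pi / 2"
  by (rule rstar_less_pi_half) auto

lemma rstar_ge:
  assumes "M > 0" "k > 0" "3 * M \<le> r"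
  shows "pi / 2 - 1 / (k^2 * r) \<le> rstar M k r"
  unfolding rstar_eq_tortoise_integral using tortoise_density_integral_tail(3)[OF assms] by simp

lemma continuous_on_rstar:
  assumes "M > 0" "k > 0"
  shows "continuous_on {3 * M..R} (rstar M k)"
proof -
  have "continuous_on {3 * M..R} (\<lambda>x. rstar_3M M k + integral {3 * M..x} (tortoise_density M k))"
    by (intro continuous_intros indefinite_integral_continuous_1 tortoise_density_integrable_on_Icc assms) simp
  then show ?thesis
  proof (rule continuous_on_eq)
    fix x assume "x \<in> {3 * M..R}"
    then show "rstar_3M M k + integral {3 * M..x} (tortoise_density M k) = rstar M k x"
      using rstar_diff[OF assms order_refl, of x] by simp
  qed
qed

lemma ex_rstar_greater:
  assumes "M > 0" "k > 0" "x < pi / 2"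
  obtains R where "3 * M \<le> R" "x < rstar M k R"
proof
  define R where "R = 3 * M + 1 / (k^2 * (pi / 2 - x))"
  have h: "0 < 1 / (k^2 * (pi / 2 - x))" using assms by simp
  show R: "3 * M \<le> R" unfolding R_def using h by linarith
  have "1 / (k^2 * (pi / 2 - x)) < R" unfolding R_def using assms by simp
  then have "1 / (k^2 * R) < pi / 2 - x" using R h assms by (simp add: field_simps)
  then show "x < rstar M k R" using rstar_ge[OF assms(1,2) R] by linarith
qed

lemma rstar_r_of:
  assumes "M > 0" "k > 0" "rstar_3M M k \<le> x" "x < pi / 2"
  shows "3 * M \<le> r_of M k x" "rstar M k (r_of M k x) = x"
proof -
  obtain R where R: "3 * M \<le> R" "x < rstar M k R" using ex_rstar_greater[OF assms(1,2,4)] .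
  obtain r where r: "3 * M \<le> r" "rstar M k r = x"
    using IVT'[of "rstar M k" "3 * M" x R] assms R continuous_on_rstar[OF assms(1,2)] by auto
  then have "\<exists>!r. 3 * M \<le> r \<and> rstar M k r = x"
    using rstar_le_iff[OF assms(1,2)] by (metis order_antisym order_refl)
  then have "3 * M \<le> r_of M k x \<and> rstar M k (r_of M k x) = x"
    unfolding r_of_def by (rule theI')
  then show "3 * M \<le> r_of M k x" "rstar M k (r_of M k x) = x" by auto
qed

lemma r_of_rstar:
  assumes "M > 0" "k > 0" "3 * M \<le> r"
  shows "r_of M k (rstar M k r) = r"
proof -
  have "rstar_3M M k \<le> rstar M k r" using rstar_le_iff[OF assms(1,2) order_refl assms(3)] assms(3) by simp
  note r' = rstar_r_of[OF assms(1,2) this rstar_less_pi_half[OF assms]]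
  show ?thesis using rstar_le_iff[OF assms(1,2) r'(1) assms(3)] rstar_le_iff[OF assms(1,2) assms(3) r'(1)] r'(2)
    by (intro order_antisym) simp_all
qed

lemma continuous_on_r_of:
  assumes "M > 0" "k > 0"
  shows "continuous_on {rstar_3M M k<..<pi / 2} (r_of M k)"
proof (rule continuous_at_imp_continuous_on, rule ballI)
  fix x assume x: "x \<in> {rstar_3M M k<..<pi / 2}"
  obtain R where R: "3 * M \<le> R" "x < rstar M k R" using ex_rstar_greater[OF assms] x by auto
  have "continuous_on (rstar M k ` {3 * M..R}) (r_of M k)"
    by (rule continuous_on_inv[OF continuous_on_rstar[OF assms]]) (use r_of_rstar[OF assms] in auto)
  moreover have "{rstar_3M M k<..<rstar M k R} \<subseteq> rstar M k ` {3 * M..R}"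
  proof
    fix y assume y: "y \<in> {rstar_3M M k<..<rstar M k R}"
    then have y': "rstar_3M M k \<le> y" "y < pi / 2" using rstar_less_pi_half[OF assms R(1)] by auto
    note r' = rstar_r_of[OF assms y']
    have "r_of M k y \<le> R" using rstar_le_iff[OF assms r'(1) R(1)] r'(2) y by simp
    with r' show "y \<in> rstar M k ` {3 * M..R}" by force
  qed
  ultimately have "continuous_on {rstar_3M M k<..<rstar M k R} (r_of M k)"
    by (rule continuous_on_subset)
  moreover have "x \<in> interior {rstar_3M M k<..<rstar M k R}" using x R by auto
  ultimately show "isCont (r_of M k) x" using continuous_on_interior by blast
qed

section \<open>The potential\<close>

lemma w_excess_bounds:
  fixes M r :: real
  assumes "M > 0" "3 * M \<le> r"
  shows "1 / (3 * r^2) \<le> (r - 2 * M) / r^3" "(r - 2 * M) / r^3 \<le> 1 / r^2"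
    "1 / r^2 \<le> 1 / (9 * M^2)" "0 \<le> 6 * M / r" "6 * M / r \<le> 2"
proof -
  have r: "r > 0" using assms by simp
  have "(r / 3) / r^3 \<le> (r - 2 * M) / r^3" using r assms by (intro divide_right_mono) auto
  then show "1 / (3 * r^2) \<le> (r - 2 * M) / r^3" using r by (simp add: power2_eq_square power3_eq_cube)
  have "(r - 2 * M) / r^3 \<le> r / r^3" using r assms by (intro divide_right_mono) auto
  then show "(r - 2 * M) / r^3 \<le> 1 / r^2" using r by (simp add: power2_eq_square power3_eq_cube)
  have "(3 * M)^2 \<le> r^2" using assms by (intro power_mono) auto
  then have "1 / r^2 \<le> 1 / (3 * M)^2" using assms by (intro divide_left_mono) auto
  then show "1 / r^2 \<le> 1 / (9 * M^2)" by (simp add: power_mult_distrib)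
  show "0 \<le> 6 * M / r" "6 * M / r \<le> 2" using assms r by (simp_all add: divide_le_eq)
qed

lemma wstar_eq:
  assumes "M > 0" "k > 0" "rstar_3M M k \<le> x" "x < pi / 2"
  shows "wstar M k x = k^2 + (r_of M k x - 2 * M) / (r_of M k x)^3"
    "sixM_over_r M k x = 6 * M / r_of M k x"
proof -
  have "r_of M k x > 0" using rstar_r_of(1)[OF assms] assms(1) by linarith
  then show "wstar M k x = k^2 + (r_of M k x - 2 * M) / (r_of M k x)^3"
    unfolding wstar_def Delta_def using assms(4)
    by (simp add: field_simps power2_eq_square power3_eq_cube power4_eq_xxxx)
  show "sixM_over_r M k x = 6 * M / r_of M k x" unfolding sixM_over_r_def using assms(4) by simp
qed

definition w_max :: "real \<Rightarrow> real \<Rightarrow> real" where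
  "w_max M k = k^2 + 1 / (9 * M^2)"

lemma w_max_pos: "M > 0 \<Longrightarrow> k > 0 \<Longrightarrow> w_max M k > 0"
  unfolding w_max_def by (simp add: add_pos_nonneg)

lemma wstar_bounds:
  assumes "M > 0" "k > 0" "x \<in> QM_interval M k"
  shows "k^2 \<le> wstar M k x" "wstar M k x \<le> w_max M k"
    "0 \<le> sixM_over_r M k x" "sixM_over_r M k x \<le> 2"
proof -
  have "(k^2 \<le> wstar M k x \<and> wstar M k x \<le> w_max M k) \<and>
        (0 \<le> sixM_over_r M k x \<and> sixM_over_r M k x \<le> 2)"
  proof (cases "x < pi / 2")
    case True
    have x: "rstar_3M M k \<le> x" using assms(3) by simp
    show ?thesis
      unfolding wstar_eq[OF assms(1,2) x True] w_max_def
      using w_excess_bounds[OF assms(1) rstar_r_of(1)[OF assms(1,2) x True]] by linarith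
  next
    case False
    then show ?thesis using assms unfolding wstar_def sixM_over_r_def w_max_def by simp
  qed
  then show "k^2 \<le> wstar M k x" "wstar M k x \<le> w_max M k"
    "0 \<le> sixM_over_r M k x" "sixM_over_r M k x \<le> 2" by auto
qed

lemma L_ge_6: "l \<ge> 2 \<Longrightarrow> 6 \<le> real (l * (l + 1))"
proof -
  assume "l \<ge> 2"
  then have "2 * 3 \<le> l * (l + 1)" by (intro mult_mono) auto
  then show ?thesis by linarith
qed

lemma Vpot_bounds:
  assumes "M > 0" "k > 0" "x \<in> QM_interval M k" "l \<ge> 2"
  shows "0 \<le> Vpot M k l x" "Vpot M k l x \<le> wstar M k x * real (l * (l + 1))"
    "Vpot M k l x \<le> real (l * (l + 1)) * w_max M k"
    "wstar M k x * real (l * (l + 1)) - 2 * w_max M k \<le> Vpot M k l x"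
proof -
  note w = wstar_bounds[OF assms(1-3)]
  define L where "L = real (l * (l + 1))"
  have L: "6 \<le> L" unfolding L_def by (rule L_ge_6[OF assms(4)])
  have w0: "0 \<le> wstar M k x" using w(1) by (smt (verit) zero_le_power2)
  have V: "Vpot M k l x = wstar M k x * (L - sixM_over_r M k x)" unfolding Vpot_def L_def ..
  show "0 \<le> Vpot M k l x" unfolding V using w0 w(4) L by simp
  have "wstar M k x * (L - sixM_over_r M k x) \<le> wstar M k x * L"
    using w0 w(3) by (intro mult_left_mono) auto
  then show le: "Vpot M k l x \<le> wstar M k x * real (l * (l + 1))" unfolding V L_def .
  have "wstar M k x * L \<le> L * w_max M k" using w(2) L by (simp add: mult.commute mult_left_mono)
  with le show "Vpot M k l x \<le> real (l * (l + 1)) * w_max M k" unfolding L_def by linarith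
  have "wstar M k x * sixM_over_r M k x \<le> w_max M k * 2" using w0 w by (intro mult_mono) auto
  then show "wstar M k x * real (l * (l + 1)) - 2 * w_max M k \<le> Vpot M k l x"
    unfolding V L_def[symmetric] by (simp add: algebra_simps)
qed

lemma wstar_ge_below_rstar:
  assumes "M > 0" "k > 0" "rstar_3M M k \<le> x" "x \<le> rstar M k R" "3 * M \<le> R"
  shows "k^2 + 1 / (3 * R^2) \<le> wstar M k x"
proof -
  have x: "x < pi / 2" using assms(4) rstar_less_pi_half[OF assms(1,2,5)] by simp
  note r = rstar_r_of[OF assms(1-3) x]
  have "r_of M k x \<le> R" using rstar_le_iff[OF assms(1,2) r(1) assms(5)] r(2) assms(4) by simp
  moreover have "0 < r_of M k x" using r(1) assms(1) by linarith
  ultimately have "(r_of M k x)^2 \<le> R^2" by (intro power_mono) auto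
  then have "1 / (3 * R^2) \<le> 1 / (3 * (r_of M k x)^2)"
    using \<open>0 < r_of M k x\<close> by (intro divide_left_mono) (auto intro!: mult_pos_pos)
  also have "\<dots> \<le> (r_of M k x - 2 * M) / (r_of M k x)^3" using w_excess_bounds(1)[OF assms(1) r(1)] .
  finally show ?thesis unfolding wstar_eq[OF assms(1-3) x] by simp
qed

lemma wstar_le_above_rstar:
  assumes "M > 0" "k > 0" "rstar M k R \<le> x" "x \<le> pi / 2" "3 * M \<le> R"
  shows "wstar M k x \<le> k^2 + 1 / R^2"
proof (cases "x < pi / 2")
  case True
  have "rstar_3M M k \<le> rstar M k R" using rstar_le_iff[OF assms(1,2) order_refl assms(5)] assms(5) by simp
  then have x: "rstar_3M M k \<le> x" using assms(3) by linarith
  note r = rstar_r_of[OF assms(1,2) x True]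
  have "R \<le> r_of M k x" using rstar_le_iff[OF assms(1,2) assms(5) r(1)] r(2) assms(3) by simp
  moreover have "0 < R" using assms(1,5) by linarith
  ultimately have "R^2 \<le> (r_of M k x)^2" by (intro power_mono) auto
  then have "1 / (r_of M k x)^2 \<le> 1 / R^2"
    using \<open>0 < R\<close> by (intro divide_left_mono) (auto intro!: mult_pos_pos)
  with w_excess_bounds(2)[OF assms(1) r(1)] show ?thesis unfolding wstar_eq[OF assms(1,2) x True] by simp
next
  case False
  then show ?thesis using assms(4) unfolding wstar_def by simp
qed

lemma continuous_on_Vpot:
  assumes "M > 0" "k > 0"
  shows "continuous_on {rstar_3M M k<..<pi / 2} (Vpot M k l)"
proof -
  have "r_of M k x \<noteq> 0" if "x \<in> {rstar_3M M k<..<pi / 2}" for x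
    using rstar_r_of(1)[OF assms, of x] that assms by auto
  then have "continuous_on {rstar_3M M k<..<pi / 2}
      (\<lambda>x. (k^2 + (r_of M k x - 2 * M) / (r_of M k x)^3) * (real (l * (l + 1)) - 6 * M / r_of M k x))"
    by (intro continuous_intros continuous_on_r_of[OF assms]) auto
  then show ?thesis
    by (rule continuous_on_eq) (simp add: Vpot_def wstar_eq[OF assms])
qed

lemma Vpot_mult_integrable:
  fixes f :: "real \<Rightarrow> real"
  assumes "M > 0" "k > 0" "l \<ge> 2" "continuous_on (QM_interval M k) f"
    "rstar_3M M k \<le> c" "d \<le> pi / 2"
  shows "(\<lambda>x. Vpot M k l x * f x) integrable_on {c..d}"
proof -
  obtain B where B: "\<And>x. x \<in> QM_interval M k \<Longrightarrow> \<bar>f x\<bar> \<le> B"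
    using compact_imp_bounded[OF compact_continuous_image[OF assms(4)]]
    unfolding bounded_iff by fastforce
  have sub: "{c<..<d} \<subseteq> {rstar_3M M k<..<pi / 2}" using assms by auto
  have "continuous_on {c<..<d} (\<lambda>x. Vpot M k l x * f x)"
    by (intro continuous_on_mult continuous_on_subset[OF continuous_on_Vpot[OF assms(1,2)] sub]
        continuous_on_subset[OF assms(4)]) (use sub in auto)
  then have meas: "(\<lambda>x. Vpot M k l x * f x) \<in> borel_measurable (lebesgue_on {c<..<d})"
    by (rule continuous_imp_measurable_on_sets_lebesgue) simp
  define C where "C = real (l * (l + 1)) * w_max M k * B"
  have bound: "\<bar>Vpot M k l x * f x\<bar> \<le> C" if "x \<in> {c<..<d}" for x
  proof -
    have x: "x \<in> QM_interval M k" using that assms by auto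
    note V = Vpot_bounds[OF assms(1,2) x assms(3)]
    show ?thesis unfolding abs_mult C_def using V(1,3) B[OF x] by (simp add: mult_mono)
  qed
  have "(\<lambda>_. C) integrable_on {c<..<d}"
    using integrable_on_Icc_iff_Ioo[of "\<lambda>_. C" c d] integrable_continuous_interval[OF continuous_on_const] by blast
  moreover have "{c<..<d} \<in> sets lebesgue"
    by (metis borel_open open_greaterThanLessThan sets_completionI_sets sets_lborel)
  ultimately have "(\<lambda>x. Vpot M k l x * f x) integrable_on {c<..<d}"
    using measurable_bounded_by_integrable_imp_integrable_real[OF meas _ bound] by blast
  then show ?thesis using integrable_on_Icc_iff_Ioo by blast
qed

section \<open>The Rayleigh quotient and its minimisers\<close>

definition QM_num_boundary_coeff :: "real \<Rightarrow> real \<Rightarrow> nat \<Rightarrow> real" where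
  "QM_num_boundary_coeff M k l = 6 * M * k^2 / (real (l * (l + 1)) - 2)"

definition QM_den_boundary_coeff :: "real \<Rightarrow> nat \<Rightarrow> real" where
  "QM_den_boundary_coeff M l = 12 * M / (real (l * (l + 1)) * (real (l * (l + 1)) - 2))"

lemma QM_boundary_coeff_bounds:
  assumes "M > 0" "k > 0" "l \<ge> 2"
  shows "0 < QM_num_boundary_coeff M k l" "QM_num_boundary_coeff M k l \<le> 2 * M * k^2"
    "0 < QM_den_boundary_coeff M l" "real (l * (l + 1)) * QM_den_boundary_coeff M l \<le> 3 * M"
proof -
  define L where "L = real (l * (l + 1))"
  have L: "6 \<le> L" unfolding L_def by (rule L_ge_6[OF assms(3)])
  show "0 < QM_num_boundary_coeff M k l" "0 < QM_den_boundary_coeff M l"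
    unfolding QM_num_boundary_coeff_def QM_den_boundary_coeff_def L_def[symmetric] using L assms by simp_all
  have "6 * M * k^2 / (L - 2) \<le> 6 * M * k^2 / 3" using L assms by (intro divide_left_mono) auto
  then show "QM_num_boundary_coeff M k l \<le> 2 * M * k^2"
    unfolding QM_num_boundary_coeff_def L_def[symmetric] by simp
  have "L * QM_den_boundary_coeff M l = 12 * M / (L - 2)"
    unfolding QM_den_boundary_coeff_def L_def[symmetric] using L by (simp add: field_simps)
  also have "\<dots> \<le> 12 * M / 4" using L assms by (intro divide_left_mono) auto
  finally show "real (l * (l + 1)) * QM_den_boundary_coeff M l \<le> 3 * M" unfolding L_def by simp
qed

definition QM_num_form :: "real \<Rightarrow> real \<Rightarrow> nat \<Rightarrow> (real \<Rightarrow> real) \<Rightarrow> (real \<Rightarrow> real) \<Rightarrow> real" where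
  "QM_num_form M k l R S =
     integral (QM_interval M k) (\<lambda>x. deriv R x * deriv S x + Vpot M k l x * (R x * S x))
     + QM_num_boundary_coeff M k l * (R (pi / 2) * S (pi / 2))"

definition QM_den_form :: "real \<Rightarrow> real \<Rightarrow> nat \<Rightarrow> (real \<Rightarrow> real) \<Rightarrow> (real \<Rightarrow> real) \<Rightarrow> real" where
  "QM_den_form M k l R S =
     integral (QM_interval M k) (\<lambda>x. R x * S x) + QM_den_boundary_coeff M l * (R (pi / 2) * S (pi / 2))"

lemma QM_num_eq_form: "QM_num M k l R = QM_num_form M k l R R"
  unfolding QM_num_def QM_num_form_def QM_num_boundary_coeff_def by (simp add: power2_eq_square)

lemma QM_den_eq_form: "QM_den M k l R = QM_den_form M k l R R"
  unfolding QM_den_def QM_den_form_def QM_den_boundary_coeff_def by (simp add: power2_eq_square)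

lemma QM_den_eq:
  "QM_den M k l S = integral (QM_interval M k) (\<lambda>x. (S x)^2) + QM_den_boundary_coeff M l * (S (pi / 2))^2"
  unfolding QM_den_def QM_den_boundary_coeff_def ..

definition QM_quotient :: "real \<Rightarrow> real \<Rightarrow> nat \<Rightarrow> (real \<Rightarrow> real) \<Rightarrow> real" where
  "QM_quotient M k l R = QM_num M k l R / QM_den M k l R"

lemma C1_differentiable_on_deriv:
  fixes f :: "real \<Rightarrow> real"
  assumes "f C1_differentiable_on S"
  shows "\<And>x. x \<in> S \<Longrightarrow> (f has_real_derivative deriv f x) (at x)" "continuous_on S (deriv f)"
proof -
  obtain D where D: "\<And>x. x \<in> S \<Longrightarrow> (f has_real_derivative D x) (at x)" "continuous_on S D"
    using assms unfolding C1_differentiable_on_def has_real_derivative_iff_has_vector_derivative by blast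
  then have eq: "\<And>x. x \<in> S \<Longrightarrow> deriv f x = D x" by (simp add: DERIV_imp_deriv)
  show "\<And>x. x \<in> S \<Longrightarrow> (f has_real_derivative deriv f x) (at x)" using D(1) eq by simp
  show "continuous_on S (deriv f)" using D(2) eq by (simp add: continuous_on_eq)
qed

lemma integral_square_pos:
  fixes f :: "real \<Rightarrow> real"
  assumes "a < b" "continuous_on {a..b} f" "x0 \<in> {a..b}" "f x0 \<noteq> 0"
  shows "0 < integral {a..b} (\<lambda>x. (f x)^2)"
proof -
  have cont: "continuous_on {a..b} (\<lambda>x. (f x)^2)" by (intro continuous_intros assms(2))
  have "integral {a..b} (\<lambda>x. (f x)^2) \<noteq> 0"
    using integral_eq_0_iff[OF cont assms(1)] assms(3,4) by auto
  moreover have "0 \<le> integral {a..b} (\<lambda>x. (f x)^2)"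
    by (intro integral_nonneg integrable_continuous_interval cont) simp
  ultimately show ?thesis by linarith
qed

lemma QM_den_pos:
  assumes "M > 0" "k > 0" "l \<ge> 2" "continuous_on (QM_interval M k) S"
    "x0 \<in> QM_interval M k" "S x0 \<noteq> 0"
  shows "0 < QM_den M k l S"
proof -
  have "0 < integral (QM_interval M k) (\<lambda>x. (S x)^2)"
    using integral_square_pos[OF rstar_3M_less_pi_half[OF assms(1,2)] assms(4-6)] .
  moreover have "0 \<le> QM_den_boundary_coeff M l * (S (pi / 2))^2"
    using QM_boundary_coeff_bounds(3)[OF assms(1-3)] by simp
  ultimately show ?thesis unfolding QM_den_eq by simp
qed

lemma QM_admissible_den_pos:
  assumes "M > 0" "k > 0" "l \<ge> 2" "QM_admissible M k S"
  shows "0 < QM_den M k l S"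
proof -
  obtain x0 where S: "S C1_differentiable_on QM_interval M k" "x0 \<in> QM_interval M k" "S x0 \<noteq> 0"
    using assms(4) unfolding QM_admissible_def by blast
  show ?thesis by (rule QM_den_pos[OF assms(1-3) C1_differentiable_imp_continuous_on[OF S(1)] S(2,3)])
qed

lemma is_R_QM_num_eq:
  assumes "M > 0" "k > 0" "l \<ge> 2" "is_R_QM M k l R"
  shows "QM_num M k l R = QM_quotient M k l R * QM_den M k l R"
proof -
  have "0 < QM_den M k l R" using assms(4) QM_admissible_den_pos[OF assms(1-3)] unfolding is_R_QM_def by blast
  then show ?thesis unfolding QM_quotient_def by simp
qed

lemma QM_num_integrand_integrable:
  assumes "M > 0" "k > 0" "l \<ge> 2"
    "R C1_differentiable_on QM_interval M k" "S C1_differentiable_on QM_interval M k"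
    "rstar_3M M k \<le> c" "d \<le> pi / 2"
  shows "(\<lambda>x. deriv R x * deriv S x + Vpot M k l x * (R x * S x)) integrable_on {c..d}"
proof (rule integrable_add)
  have "continuous_on (QM_interval M k) (\<lambda>x. deriv R x * deriv S x)"
    using C1_differentiable_on_deriv(2)[OF assms(4)] C1_differentiable_on_deriv(2)[OF assms(5)]
    by (rule continuous_on_mult)
  then show "(\<lambda>x. deriv R x * deriv S x) integrable_on {c..d}"
    by (rule integrable_continuous_interval[OF continuous_on_subset]) (use assms(6,7) in auto)
  have "continuous_on (QM_interval M k) (\<lambda>x. R x * S x)"
    using C1_differentiable_imp_continuous_on[OF assms(4)] C1_differentiable_imp_continuous_on[OF assms(5)]
    by (rule continuous_on_mult)
  then show "(\<lambda>x. Vpot M k l x * (R x * S x)) integrable_on {c..d}"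
    by (rule Vpot_mult_integrable[OF assms(1-3) _ assms(6,7)])
qed

lemma integral_quadratic_combination:
  fixes f0 f1 f2 :: "'a::euclidean_space \<Rightarrow> real"
  assumes "f0 integrable_on S" "f1 integrable_on S" "f2 integrable_on S"
  shows "integral S (\<lambda>x. f0 x + 2 * t * f1 x + t^2 * f2 x)
           = integral S f0 + 2 * t * integral S f1 + t^2 * integral S f2"
proof -
  have f1: "(\<lambda>x. 2 * t * f1 x) integrable_on S"
    using integrable_on_cmult_left[OF assms(2), of "2 * t"] by simp
  have f2: "(\<lambda>x. t^2 * f2 x) integrable_on S"
    using integrable_on_cmult_left[OF assms(3), of "t^2"] by simp
  have "integral S (\<lambda>x. f0 x + 2 * t * f1 x + t^2 * f2 x)
      = integral S (\<lambda>x. f0 x + 2 * t * f1 x) + integral S (\<lambda>x. t^2 * f2 x)"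
    by (rule integral_add[OF integrable_add[OF assms(1) f1] f2])
  also have "integral S (\<lambda>x. f0 x + 2 * t * f1 x) = integral S f0 + integral S (\<lambda>x. 2 * t * f1 x)"
    by (rule integral_add[OF assms(1) f1])
  finally show ?thesis by simp
qed

lemma QM_num_expand:
  assumes "M > 0" "k > 0" "l \<ge> 2"
    "R C1_differentiable_on QM_interval M k" "E C1_differentiable_on QM_interval M k"
  shows "QM_num M k l (\<lambda>x. R x + t * E x)
           = QM_num M k l R + 2 * t * QM_num_form M k l R E + t^2 * QM_num M k l E"
proof -
  let ?f = "\<lambda>R S x. deriv R x * deriv S x + Vpot M k l x * (R x * S x)"
  have "deriv (\<lambda>x. R x + t * E x) x = deriv R x + t * deriv E x" if "x \<in> QM_interval M k" for x
    by (intro DERIV_imp_deriv DERIV_add DERIV_cmult C1_differentiable_on_deriv(1)[OF assms(4)]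
        C1_differentiable_on_deriv(1)[OF assms(5)] that)
  then have "integral (QM_interval M k) (?f (\<lambda>x. R x + t * E x) (\<lambda>x. R x + t * E x))
      = integral (QM_interval M k) (\<lambda>x. ?f R R x + 2 * t * ?f R E x + t^2 * ?f E E x)"
    by (intro integral_cong) (simp add: algebra_simps power2_eq_square)
  also have "\<dots> = integral (QM_interval M k) (?f R R) + 2 * t * integral (QM_interval M k) (?f R E)
      + t^2 * integral (QM_interval M k) (?f E E)"
    by (intro integral_quadratic_combination QM_num_integrand_integrable assms order_refl)
  finally show ?thesis
    unfolding QM_num_eq_form QM_num_form_def by (simp add: algebra_simps power2_eq_square)
qed

lemma QM_den_expand:
  assumes "continuous_on (QM_interval M k) R" "continuous_on (QM_interval M k) E"
  shows "QM_den M k l (\<lambda>x. R x + t * E x)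
           = QM_den M k l R + 2 * t * QM_den_form M k l R E + t^2 * QM_den M k l E"
proof -
  have "integral (QM_interval M k) (\<lambda>x. (R x + t * E x) * (R x + t * E x))
      = integral (QM_interval M k) (\<lambda>x. R x * R x + 2 * t * (R x * E x) + t^2 * (E x * E x))"
    by (intro integral_cong) (simp add: algebra_simps power2_eq_square)
  also have "\<dots> = integral (QM_interval M k) (\<lambda>x. R x * R x) + 2 * t * integral (QM_interval M k) (\<lambda>x. R x * E x)
      + t^2 * integral (QM_interval M k) (\<lambda>x. E x * E x)"
    by (intro integral_quadratic_combination integrable_continuous_interval continuous_intros assms)
  finally show ?thesis
    unfolding QM_den_eq_form QM_den_form_def by (simp add: algebra_simps power2_eq_square)
qed

lemma linear_coeff_eq_0_if_quadratic_nonneg: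
  fixes A B t0 :: real
  assumes "\<And>t. t \<noteq> t0 \<Longrightarrow> 0 \<le> 2 * t * B + t^2 * A"
  shows "B = 0"
proof (rule ccontr)
  assume B: "B \<noteq> 0"
  define s where "s = 1 / (\<bar>A\<bar> + 1)"
  have neg: "2 * (- B * s') * B + (- B * s')^2 * A < 0" if "0 < s'" "s' \<le> s" for s'
  proof -
    have "s' * A \<le> s' * \<bar>A\<bar>" using that by (simp add: mult_left_mono)
    also have "\<dots> \<le> s * \<bar>A\<bar>" using that by (simp add: mult_right_mono)
    also have "\<dots> < 1" unfolding s_def by (simp add: field_simps)
    finally have "s' * A - 2 < 0" by simp
    moreover have "0 < B^2 * s'" using B that by simp
    moreover have "2 * (- B * s') * B + (- B * s')^2 * A = (B^2 * s') * (s' * A - 2)"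
      by (simp add: algebra_simps power2_eq_square)
    ultimately show ?thesis by (simp add: mult_pos_neg)
  qed
  have s: "0 < s" unfolding s_def by (simp add: add_pos_nonneg)
  obtain s' where "s' \<in> {s / 2, s}" "- B * s' \<noteq> t0"
  proof (cases "- B * s = t0")
    case True
    then show ?thesis using B s that[of "s / 2"] by auto
  qed auto
  then show False using assms[of "- B * s'"] neg[of s'] s by auto
qed

lemma is_R_QM_first_variation:
  assumes "M > 0" "k > 0" "l \<ge> 2" "is_R_QM M k l R"
    "E C1_differentiable_on QM_interval M k" "E (rstar_3M M k) = 0"
  shows "QM_num_form M k l R E = QM_quotient M k l R * QM_den_form M k l R E"
proof -
  define q where "q = QM_quotient M k l R"
  have R: "QM_admissible M k R" and min: "\<And>S. QM_admissible M k S \<Longrightarrow> q \<le> QM_quotient M k l S"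
    using assms(4) unfolding is_R_QM_def q_def QM_quotient_def by auto
  then obtain x0 where x0: "x0 \<in> QM_interval M k" "R x0 \<noteq> 0" unfolding QM_admissible_def by blast
  have R_C1: "R C1_differentiable_on QM_interval M k" and R_cont: "continuous_on (QM_interval M k) R"
    using R C1_differentiable_imp_continuous_on unfolding QM_admissible_def by blast+
  have E_cont: "continuous_on (QM_interval M k) E" using assms(5) by (rule C1_differentiable_imp_continuous_on)
  have num_R: "QM_num M k l R = q * QM_den M k l R" unfolding q_def by (rule is_R_QM_num_eq[OF assms(1-4)])
  \<comment> \<open>\<open>R + t E\<close> is admissible unless it vanishes at \<open>x0\<close>, which excludes at most this \<open>t\<close>
     (a junk value if \<open>E x0 = 0\<close>, when no \<open>t\<close> is excluded)\<close>
  have "0 \<le> 2 * t * (QM_num_form M k l R E - q * QM_den_form M k l R E)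
              + t^2 * (QM_num M k l E - q * QM_den M k l E)"
    if t: "t \<noteq> - R x0 / E x0" for t
  proof -
    let ?S = "\<lambda>x. R x + t * E x"
    have "?S x0 \<noteq> 0"
    proof
      assume "?S x0 = 0"
      with x0(2) have "E x0 \<noteq> 0" by auto
      with \<open>?S x0 = 0\<close> t show False by (simp add: field_simps)
    qed
    then have "QM_admissible M k ?S"
      unfolding QM_admissible_def using R_C1 assms(5,6) R x0(1) by (auto simp: QM_admissible_def)
    then have "q * QM_den M k l ?S \<le> QM_num M k l ?S"
      using min QM_admissible_den_pos[OF assms(1-3)] by (simp add: QM_quotient_def pos_le_divide_eq)
    then show ?thesis
      unfolding QM_num_expand[OF assms(1-3) R_C1 assms(5)] QM_den_expand[OF R_cont E_cont] num_R
      by (simp add: algebra_simps)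
  qed
  then have "QM_num_form M k l R E - q * QM_den_form M k l R E = 0"
    by (rule linear_coeff_eq_0_if_quadratic_nonneg)
  then show ?thesis unfolding q_def by simp
qed

section \<open>An upper bound for the lowest eigenvalue\<close>

lemma integral_mult_le_two_piece_bound:
  fixes g h :: "real \<Rightarrow> real"
  assumes "a \<le> c" "c \<le> b" "(\<lambda>x. g x * h x) integrable_on {a..b}" "h integrable_on {a..b}"
    "\<And>x. x \<in> {a..b} \<Longrightarrow> 0 \<le> h x" "\<And>x. x \<in> {a..c} \<Longrightarrow> g x \<le> A" "\<And>x. x \<in> {c..b} \<Longrightarrow> g x \<le> B"
  shows "integral {a..b} (\<lambda>x. g x * h x) \<le> A * integral {a..c} h + B * integral {c..b} h"
proof -
  have int: "(\<lambda>x. g x * h x) integrable_on {a..c}" "(\<lambda>x. g x * h x) integrable_on {c..b}"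
    "h integrable_on {a..c}" "h integrable_on {c..b}"
    using assms(1-4) by (auto intro: integrable_on_subinterval)
  have "integral {a..c} (\<lambda>x. g x * h x) \<le> integral {a..c} (\<lambda>x. A * h x)"
  proof (rule integral_le[OF int(1) integrable_on_mult_right[OF int(3)]])
    fix x assume "x \<in> {a..c}"
    then show "g x * h x \<le> A * h x" using assms(1,2,5,6) by (intro mult_right_mono) auto
  qed
  moreover have "integral {c..b} (\<lambda>x. g x * h x) \<le> integral {c..b} (\<lambda>x. B * h x)"
  proof (rule integral_le[OF int(2) integrable_on_mult_right[OF int(4)]])
    fix x assume "x \<in> {c..b}"
    then show "g x * h x \<le> B * h x" using assms(1,2,5,7) by (intro mult_right_mono) auto
  qed
  moreover have "integral {a..c} (\<lambda>x. g x * h x) + integral {c..b} (\<lambda>x. g x * h x) = integral {a..b} (\<lambda>x. g x * h x)"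
    by (rule Henstock_Kurzweil_Integration.integral_combine[OF assms(1-3)])
  ultimately show ?thesis by simp
qed

lemma Vpot_le_above_rstar:
  assumes "M > 0" "k > 0" "l \<ge> 2" "rstar M k R \<le> x" "x \<le> pi / 2" "3 * M \<le> R"
  shows "Vpot M k l x \<le> (k^2 + 1 / R^2) * real (l * (l + 1))"
proof -
  have "rstar_3M M k \<le> rstar M k R" using rstar_le_iff[OF assms(1,2) order_refl assms(6)] assms(6) by simp
  then have "x \<in> QM_interval M k" using assms(4,5) by simp
  with Vpot_bounds(2)[OF assms(1,2) _ assms(3)] wstar_le_above_rstar[OF assms(1,2,4,5,6)]
  show ?thesis by (smt (verit) mult_right_mono of_nat_0_le_iff)
qed

lemma QM_quotient_le_if_potential_bound:
  assumes "M > 0" "k > 0" "l \<ge> 2" "QM_admissible M k S" "0 \<le> B"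
    and potential: "integral (QM_interval M k) (\<lambda>x. Vpot M k l x * (S x)^2)
                      \<le> B * integral (QM_interval M k) (\<lambda>x. (S x)^2)"
  shows "QM_quotient M k l S \<le> B
           + (integral (QM_interval M k) (\<lambda>x. (deriv S x)^2) + 2 * M * k^2 * (S (pi / 2))^2)
             / integral (QM_interval M k) (\<lambda>x. (S x)^2)"
proof -
  define T where "T = integral (QM_interval M k) (\<lambda>x. (S x)^2)"
  define K0 where "K0 = integral (QM_interval M k) (\<lambda>x. (deriv S x)^2) + 2 * M * k^2 * (S (pi / 2))^2"
  obtain x0 where S_C1: "S C1_differentiable_on QM_interval M k"
    and x0: "x0 \<in> QM_interval M k" "S x0 \<noteq> 0"
    using assms(4) unfolding QM_admissible_def by blast
  have T: "0 < T" unfolding T_def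
    by (rule integral_square_pos[OF rstar_3M_less_pi_half[OF assms(1,2)]
          C1_differentiable_imp_continuous_on[OF S_C1] x0])
  have DS2: "(\<lambda>x. (deriv S x)^2) integrable_on QM_interval M k"
    using C1_differentiable_on_deriv(2)[OF S_C1] by (intro integrable_continuous_interval continuous_intros)
  have "QM_num M k l S = integral (QM_interval M k) (\<lambda>x. (deriv S x)^2)
      + integral (QM_interval M k) (\<lambda>x. Vpot M k l x * (S x)^2) + QM_num_boundary_coeff M k l * (S (pi / 2))^2"
    unfolding QM_num_def QM_num_boundary_coeff_def
    by (subst integral_add[OF DS2 Vpot_mult_integrable[OF assms(1-3) _ order_refl order_refl]])
       (use C1_differentiable_imp_continuous_on[OF S_C1] in \<open>auto intro: continuous_intros\<close>)
  also have "\<dots> \<le> K0 + B * T"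
    using potential QM_boundary_coeff_bounds(2)[OF assms(1-3)] unfolding K0_def T_def
    by (smt (verit) mult_right_mono zero_le_power2)
  finally have num: "QM_num M k l S \<le> K0 + B * T" .
  have den: "T \<le> QM_den M k l S"
    using QM_boundary_coeff_bounds(3)[OF assms(1-3)] unfolding QM_den_eq T_def by simp
  have "0 \<le> K0" unfolding K0_def using assms(1) by (intro add_nonneg_nonneg integral_nonneg DS2) auto
  then have "QM_num M k l S / QM_den M k l S \<le> (K0 + B * T) / T"
    using num den T assms(5) by (intro frac_le) auto
  also have "\<dots> = B + K0 / T" using T by (simp add: field_simps)
  finally show ?thesis unfolding QM_quotient_def K0_def T_def .
qed

text \<open>Away from the photon sphere \<open>w\<close> is close to its infimum \<open>k\<^sup>2\<close>, so a trial function whose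
  mass concentrates there has quotient close to \<open>k\<^sup>2 \<ell>(\<ell>+1)\<close>.\<close>

lemma QM_quotient_le_if_concentrated:
  assumes "M > 0" "k > 0" "l \<ge> 2" "\<epsilon> > 0" "3 * M \<le> R2" "1 / R2^2 \<le> \<epsilon>" "QM_admissible M k S"
    and concentrated: "w_max M k * integral {rstar_3M M k..rstar M k R2} (\<lambda>x. (S x)^2)
                         \<le> \<epsilon> * integral (QM_interval M k) (\<lambda>x. (S x)^2)"
  shows "QM_quotient M k l S \<le> (k^2 + 2 * \<epsilon>) * real (l * (l + 1))
           + (integral (QM_interval M k) (\<lambda>x. (deriv S x)^2) + 2 * M * k^2 * (S (pi / 2))^2)
             / integral (QM_interval M k) (\<lambda>x. (S x)^2)"
proof (rule QM_quotient_le_if_potential_bound[OF assms(1-3,7)])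
  define L where "L = real (l * (l + 1))"
  define x2 where "x2 = rstar M k R2"
  have L: "6 \<le> L" unfolding L_def by (rule L_ge_6[OF assms(3)])
  show "0 \<le> (k^2 + 2 * \<epsilon>) * real (l * (l + 1))" using assms(4) by simp
  have x2: "rstar_3M M k \<le> x2" "x2 \<le> pi / 2"
    using rstar_le_iff[OF assms(1,2) order_refl assms(5)] rstar_less_pi_half[OF assms(1,2,5)] assms(5)
    unfolding x2_def by auto
  have S2: "continuous_on (QM_interval M k) (\<lambda>x. (S x)^2)"
    using assms(7) unfolding QM_admissible_def by (blast intro: continuous_intros C1_differentiable_imp_continuous_on)
  have int_S2: "(\<lambda>x. (S x)^2) integrable_on {c..d}" if "rstar_3M M k \<le> c" "d \<le> pi / 2" for c d
    by (rule integrable_continuous_interval[OF continuous_on_subset[OF S2]]) (use that in auto)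
  have "integral (QM_interval M k) (\<lambda>x. Vpot M k l x * (S x)^2)
      \<le> L * w_max M k * integral {rstar_3M M k..x2} (\<lambda>x. (S x)^2)
        + (k^2 + \<epsilon>) * L * integral {x2..pi / 2} (\<lambda>x. (S x)^2)"
  proof (rule integral_mult_le_two_piece_bound[OF x2 Vpot_mult_integrable[OF assms(1-3) S2 order_refl order_refl]
        int_S2[OF order_refl order_refl]])
    fix x
    show "x \<in> {rstar_3M M k..x2} \<Longrightarrow> Vpot M k l x \<le> L * w_max M k"
      using Vpot_bounds(3)[OF assms(1,2) _ assms(3)] x2 unfolding L_def by auto
    assume "x \<in> {x2..pi / 2}"
    with Vpot_le_above_rstar[OF assms(1-3) _ _ assms(5)] assms(6) L
    show "Vpot M k l x \<le> (k^2 + \<epsilon>) * L"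
      unfolding x2_def L_def by (smt (verit) atLeastAtMost_iff mult_right_mono)
  qed simp
  also have "\<dots> \<le> L * (\<epsilon> * integral (QM_interval M k) (\<lambda>x. (S x)^2))
        + (k^2 + \<epsilon>) * L * integral (QM_interval M k) (\<lambda>x. (S x)^2)"
  proof (rule add_mono)
    show "L * w_max M k * integral {rstar_3M M k..x2} (\<lambda>x. (S x)^2)
        \<le> L * (\<epsilon> * integral (QM_interval M k) (\<lambda>x. (S x)^2))"
      using concentrated L unfolding x2_def by (simp add: mult.assoc mult_left_mono)
    have "integral {rstar_3M M k..x2} (\<lambda>x. (S x)^2) + integral {x2..pi / 2} (\<lambda>x. (S x)^2)
        = integral (QM_interval M k) (\<lambda>x. (S x)^2)"
      by (rule Henstock_Kurzweil_Integration.integral_combine[OF x2 int_S2]) auto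
    moreover have "0 \<le> integral {rstar_3M M k..x2} (\<lambda>x. (S x)^2)"
      by (rule integral_nonneg[OF int_S2]) (use x2 in auto)
    ultimately show "(k^2 + \<epsilon>) * L * integral {x2..pi / 2} (\<lambda>x. (S x)^2)
        \<le> (k^2 + \<epsilon>) * L * integral (QM_interval M k) (\<lambda>x. (S x)^2)"
      using assms(4) L by (intro mult_left_mono) auto
  qed
  finally show "integral (QM_interval M k) (\<lambda>x. Vpot M k l x * (S x)^2)
      \<le> (k^2 + 2 * \<epsilon>) * real (l * (l + 1)) * integral (QM_interval M k) (\<lambda>x. (S x)^2)"
    unfolding L_def by (simp add: algebra_simps)
qed

lemma integral_shifted_power:
  fixes a c :: real
  assumes "a \<le> c"
  shows "integral {a..c} (\<lambda>x. (x - a)^m) = (c - a)^Suc m / Suc m"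
proof -
  have "((\<lambda>x. (x - a)^m) has_integral (c - a)^Suc m / Suc m - (a - a)^Suc m / Suc m) {a..c}"
  proof (rule fundamental_theorem_of_calculus[OF assms])
    fix x
    have "((\<lambda>x. (x - a)^Suc m / Suc m) has_real_derivative (x - a)^m) (at x)"
      by (rule derivative_eq_intros refl | simp)+
    then show "((\<lambda>x. (x - a)^Suc m / Suc m) has_vector_derivative (x - a)^m) (at x within {a..c})"
      by (simp add: has_real_derivative_iff_has_vector_derivative has_vector_derivative_at_within)
  qed
  then show ?thesis by (simp add: integral_unique)
qed

lemma C1_differentiable_on_shifted_power: "(\<lambda>x::real. (x - a)^n) C1_differentiable_on S"
  by (induction n) (simp_all add: power_Suc)

lemma shifted_power_concentrates:
  fixes a c b W \<epsilon> :: real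
  assumes "a \<le> c" "c < b" "W > 0" "\<epsilon> > 0"
  obtains n where "W * integral {a..c} (\<lambda>x. ((x - a)^Suc n)^2) \<le> \<epsilon> * integral {a..b} (\<lambda>x. ((x - a)^Suc n)^2)"
proof -
  define \<rho> where "\<rho> = (c - a) / (b - a)"
  have \<rho>: "0 \<le> \<rho>" "\<rho> < 1" unfolding \<rho>_def using assms(1,2) by (auto simp: field_simps)
  obtain n where n: "\<rho>^n < \<epsilon> / W" using real_arch_pow_inv[of "\<epsilon> / W" \<rho>] assms(3,4) \<rho> by auto
  define m where "m = 2 * n + 2"
  have exponent: "Suc n * 2 = m" unfolding m_def by simp
  have sq: "((x - a)^Suc n)^2 = (x - a)^m" for x unfolding power_mult[symmetric] by (simp only: exponent)
  have ab: "a \<le> b" using assms(1,2) by linarith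
  have "(c - a)^Suc m = \<rho>^Suc m * (b - a)^Suc m"
    unfolding power_mult_distrib[symmetric] \<rho>_def using assms(1,2) by simp
  then have "integral {a..c} (\<lambda>x. (x - a)^m) = \<rho>^Suc m * integral {a..b} (\<lambda>x. (x - a)^m)"
    unfolding integral_shifted_power[OF assms(1)] integral_shifted_power[OF ab]
    by (simp only: times_divide_eq_right)
  also have "\<dots> \<le> \<epsilon> / W * integral {a..b} (\<lambda>x. (x - a)^m)"
  proof (rule mult_right_mono)
    have "\<rho>^Suc m \<le> \<rho>^n" using \<rho> unfolding m_def by (intro power_decreasing) auto
    then show "\<rho>^Suc m \<le> \<epsilon> / W" using n by linarith
    show "0 \<le> integral {a..b} (\<lambda>x. (x - a)^m)" unfolding integral_shifted_power[OF ab] using ab by simp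
  qed
  finally have "W * integral {a..c} (\<lambda>x. (x - a)^m) \<le> W * (\<epsilon> / W * integral {a..b} (\<lambda>x. (x - a)^m))"
    using assms(3) by (intro mult_left_mono) auto
  also have "\<dots> = \<epsilon> * integral {a..b} (\<lambda>x. (x - a)^m)" using assms(3) by simp
  finally show ?thesis unfolding sq[symmetric] by (rule that)
qed

text \<open>The trial function is \<open>(r\<^sup>\<star> - r\<^sup>\<star>\<^sub>3\<^sub>M)\<^sup>n\<close> with \<open>n\<close> depending only on \<open>\<epsilon>\<close>,
  so the constant \<open>C\<close> does not depend on \<open>\<ell>\<close>.\<close>

lemma QM_quotient_minimiser_upper_bound:
  assumes "M > 0" "k > 0" "\<epsilon> > 0"
  obtains C where "\<And>l R. l \<ge> 2 \<Longrightarrow> is_R_QM M k l R \<Longrightarrow>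
    QM_quotient M k l R \<le> (k^2 + 2 * \<epsilon>) * real (l * (l + 1)) + C"
proof -
  define R2 where "R2 = 3 * M + 1 / sqrt \<epsilon>"
  have R2: "3 * M \<le> R2" "1 / sqrt \<epsilon> \<le> R2" unfolding R2_def using assms by auto
  have "1 \<le> sqrt \<epsilon> * R2" using R2(2) assms(3) by (simp add: field_simps)
  then have "1 \<le> \<epsilon> * R2^2" using assms(3) by (metis one_le_power power_mult_distrib real_sqrt_pow2 less_imp_le)
  moreover have "0 < R2" using assms(1) R2(1) by linarith
  ultimately have R2_eps: "1 / R2^2 \<le> \<epsilon>" by (simp add: divide_le_eq mult.commute)
  have x2: "rstar_3M M k \<le> rstar M k R2" "rstar M k R2 < pi / 2"
    using rstar_le_iff[OF assms(1,2) order_refl R2(1)] rstar_less_pi_half[OF assms(1,2) R2(1)] R2(1) by auto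
  obtain n where n: "w_max M k * integral {rstar_3M M k..rstar M k R2} (\<lambda>x. ((x - rstar_3M M k)^Suc n)^2)
      \<le> \<epsilon> * integral (QM_interval M k) (\<lambda>x. ((x - rstar_3M M k)^Suc n)^2)"
    using shifted_power_concentrates[OF x2 w_max_pos[OF assms(1,2)] assms(3)] by blast
  define S where "S = (\<lambda>x::real. (x - rstar_3M M k)^Suc n)"
  have S_adm: "QM_admissible M k S" unfolding QM_admissible_def
  proof (intro conjI bexI)
    show "S C1_differentiable_on QM_interval M k" unfolding S_def by (rule C1_differentiable_on_shifted_power)
    show "S (rstar_3M M k) = 0" "S (pi / 2) \<noteq> 0" "pi / 2 \<in> QM_interval M k"
      unfolding S_def using rstar_3M_less_pi_half[OF assms(1,2)] by auto
  qed
  have "w_max M k * integral {rstar_3M M k..rstar M k R2} (\<lambda>x. (S x)^2)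
      \<le> \<epsilon> * integral (QM_interval M k) (\<lambda>x. (S x)^2)"
    using n unfolding S_def .
  note bound = QM_quotient_le_if_concentrated[OF assms(1,2) _ assms(3) R2(1) R2_eps S_adm this]
  show ?thesis
  proof (rule that)
    fix l R assume "l \<ge> 2" "is_R_QM M k l R"
    then have "QM_quotient M k l R \<le> QM_quotient M k l S"
      using S_adm unfolding is_R_QM_def QM_quotient_def by blast
    with bound[OF \<open>l \<ge> 2\<close>] show "QM_quotient M k l R \<le> (k^2 + 2 * \<epsilon>) * real (l * (l + 1))
        + (integral (QM_interval M k) (\<lambda>x. (deriv S x)^2) + 2 * M * k^2 * (S (pi / 2))^2)
          / integral (QM_interval M k) (\<lambda>x. (S x)^2)"
      by linarith
  qed
qed

section \<open>The Agmon estimate\<close>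

lemma QM_num_nonneg:
  assumes "M > 0" "k > 0" "l \<ge> 2" "S C1_differentiable_on QM_interval M k"
  shows "0 \<le> QM_num M k l S"
proof -
  have "0 \<le> integral (QM_interval M k) (\<lambda>x. deriv S x * deriv S x + Vpot M k l x * (S x * S x))"
  proof (rule integral_nonneg)
    show "(\<lambda>x. deriv S x * deriv S x + Vpot M k l x * (S x * S x)) integrable_on QM_interval M k"
      by (rule QM_num_integrand_integrable[OF assms(1-4,4) order_refl order_refl])
    fix x assume "x \<in> QM_interval M k"
    with Vpot_bounds(1)[OF assms(1,2) _ assms(3)]
    show "0 \<le> deriv S x * deriv S x + Vpot M k l x * (S x * S x)" by simp
  qed
  moreover have "0 \<le> QM_num_boundary_coeff M k l * (S (pi / 2) * S (pi / 2))"
    using QM_boundary_coeff_bounds(1)[OF assms(1-3)] by simp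
  ultimately show ?thesis unfolding QM_num_eq_form QM_num_form_def by simp
qed

lemma is_R_QM_quotient_nonneg:
  assumes "M > 0" "k > 0" "l \<ge> 2" "is_R_QM M k l R"
  shows "0 \<le> QM_quotient M k l R"
  using assms(4) QM_num_nonneg[OF assms(1-3)] QM_admissible_den_pos[OF assms(1-3)]
  unfolding is_R_QM_def QM_admissible_def QM_quotient_def by (meson divide_nonneg_pos)

lemma C1_differentiable_on_exp_affine: "(\<lambda>x. exp (c * (x1 - x))) C1_differentiable_on S"
  unfolding C1_differentiable_on_def
  by (rule exI[of _ "\<lambda>x. - c * exp (c * (x1 - x))"])
     (auto intro!: continuous_intros derivative_eq_intros simp: has_real_derivative_iff_has_vector_derivative[symmetric])

text \<open>The integrand obtained by testing the Euler--Lagrange equation against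
  \<open>exp (2\<mu>(x\<^sub>1 - x)) R\<close> and completing the square.\<close>

definition agmon_integrand :: "real \<Rightarrow> real \<Rightarrow> nat \<Rightarrow> (real \<Rightarrow> real) \<Rightarrow> real \<Rightarrow> real \<Rightarrow> real \<Rightarrow> real" where
  "agmon_integrand M k l R \<mu> x1 x = exp (2 * \<mu> * (x1 - x)) *
     ((deriv R x - \<mu> * R x)^2 + (Vpot M k l x - QM_quotient M k l R - \<mu>^2) * (R x)^2)"

lemma agmon_integrand_integrable:
  assumes "M > 0" "k > 0" "l \<ge> 2" "R C1_differentiable_on QM_interval M k"
    "rstar_3M M k \<le> c" "d \<le> pi / 2"
  shows "agmon_integrand M k l R \<mu> x1 integrable_on {c..d}"
proof -
  define q where "q = QM_quotient M k l R"
  note cont = C1_differentiable_imp_continuous_on[OF assms(4)] C1_differentiable_on_deriv(2)[OF assms(4)]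
  have "(\<lambda>x. exp (2 * \<mu> * (x1 - x)) * (deriv R x - \<mu> * R x)^2 - (q + \<mu>^2) * (exp (2 * \<mu> * (x1 - x)) * (R x)^2))
        integrable_on {c..d}"
    by (rule integrable_continuous_interval, rule continuous_on_subset[of "QM_interval M k"])
       (use cont assms(5,6) in \<open>auto intro!: continuous_intros\<close>)
  moreover have "(\<lambda>x. Vpot M k l x * (exp (2 * \<mu> * (x1 - x)) * (R x)^2)) integrable_on {c..d}"
    by (rule Vpot_mult_integrable[OF assms(1-3) _ assms(5,6)]) (use cont in \<open>intro continuous_intros\<close>)
  ultimately have "(\<lambda>x. exp (2 * \<mu> * (x1 - x)) * (deriv R x - \<mu> * R x)^2 - (q + \<mu>^2) * (exp (2 * \<mu> * (x1 - x)) * (R x)^2)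
        + Vpot M k l x * (exp (2 * \<mu> * (x1 - x)) * (R x)^2)) integrable_on {c..d}"
    by (rule integrable_add)
  then show ?thesis unfolding agmon_integrand_def q_def[symmetric] by (simp add: algebra_simps)
qed

lemma agmon_integral_eq:
  assumes "M > 0" "k > 0" "l \<ge> 2" "is_R_QM M k l R"
  shows "integral (QM_interval M k) (agmon_integrand M k l R \<mu> x1)
    = (QM_quotient M k l R * QM_den_boundary_coeff M l - QM_num_boundary_coeff M k l)
        * exp (2 * \<mu> * (x1 - pi / 2)) * (R (pi / 2))^2"
proof -
  define q where "q = QM_quotient M k l R"
  define \<psi> where "\<psi> = (\<lambda>x. exp (2 * \<mu> * (x1 - x)))"
  define E where "E = (\<lambda>x. \<psi> x * R x)"
  have R_C1: "R C1_differentiable_on QM_interval M k" and R0: "R (rstar_3M M k) = 0"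
    using assms(4) unfolding is_R_QM_def QM_admissible_def by auto
  have E_C1: "E C1_differentiable_on QM_interval M k"
    unfolding E_def \<psi>_def by (intro C1_differentiable_on_mult C1_differentiable_on_exp_affine R_C1)
  have dE: "deriv E x = - 2 * \<mu> * \<psi> x * R x + \<psi> x * deriv R x" if "x \<in> QM_interval M k" for x
  proof (rule DERIV_imp_deriv)
    have "(\<psi> has_real_derivative - 2 * \<mu> * \<psi> x) (at x)"
      unfolding \<psi>_def by (auto intro!: derivative_eq_intros)
    from DERIV_mult[OF this C1_differentiable_on_deriv(1)[OF R_C1 that]]
    show "(E has_real_derivative - 2 * \<mu> * \<psi> x * R x + \<psi> x * deriv R x) (at x)"
      unfolding E_def by (simp add: algebra_simps)
  qed
  have "integral (QM_interval M k) (agmon_integrand M k l R \<mu> x1)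
      = integral (QM_interval M k) (\<lambda>x. (deriv R x * deriv E x + Vpot M k l x * (R x * E x)) - q * (R x * E x))"
    by (intro integral_cong)
       (simp add: dE E_def[THEN fun_cong] agmon_integrand_def q_def \<psi>_def algebra_simps power2_eq_square)
  also have "\<dots> = integral (QM_interval M k) (\<lambda>x. deriv R x * deriv E x + Vpot M k l x * (R x * E x))
      - q * integral (QM_interval M k) (\<lambda>x. R x * E x)"
  proof -
    have "(\<lambda>x. R x * E x) integrable_on QM_interval M k"
      using C1_differentiable_imp_continuous_on[OF R_C1] C1_differentiable_imp_continuous_on[OF E_C1]
      by (intro integrable_continuous_interval continuous_on_mult)
    from integral_diff[OF QM_num_integrand_integrable[OF assms(1-3) R_C1 E_C1 order_refl order_refl]
        integrable_on_mult_right[OF this, of q]]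
    show ?thesis by simp
  qed
  also have "\<dots> = (q * QM_den_boundary_coeff M l - QM_num_boundary_coeff M k l) * (R (pi / 2) * E (pi / 2))"
    using is_R_QM_first_variation[OF assms E_C1] R0
    unfolding QM_num_form_def QM_den_form_def q_def[symmetric] E_def by (simp add: algebra_simps)
  finally show ?thesis unfolding E_def \<psi>_def q_def by (simp add: power2_eq_square)
qed

lemma agmon_integral_le:
  assumes "M > 0" "k > 0" "l \<ge> 2" "is_R_QM M k l R" "0 \<le> \<mu>" "x1 \<le> pi / 2"
  shows "integral (QM_interval M k) (agmon_integrand M k l R \<mu> x1)
           \<le> QM_quotient M k l R * QM_den_boundary_coeff M l * (R (pi / 2))^2"
proof -
  define e where "e = exp (2 * \<mu> * (x1 - pi / 2))"
  define D where "D = QM_quotient M k l R * QM_den_boundary_coeff M l * (R (pi / 2))^2"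
  have e: "0 \<le> e" "e \<le> 1" unfolding e_def using assms(5,6) by (simp_all add: mult_nonneg_nonpos)
  have "0 \<le> D" "0 \<le> QM_num_boundary_coeff M k l * (R (pi / 2))^2"
    unfolding D_def using is_R_QM_quotient_nonneg[OF assms(1-4)] QM_boundary_coeff_bounds[OF assms(1-3)] by simp_all
  moreover have "integral (QM_interval M k) (agmon_integrand M k l R \<mu> x1)
      = e * D - e * (QM_num_boundary_coeff M k l * (R (pi / 2))^2)"
    unfolding agmon_integral_eq[OF assms(1-4)] e_def D_def by (simp add: algebra_simps)
  moreover have "e * D \<le> D" using e \<open>0 \<le> D\<close> by (intro mult_left_le_one_le) auto
  ultimately show ?thesis unfolding D_def using e by (smt (verit) mult_nonneg_nonneg)
qed

lemma agmon_integrand_ge_gap: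
  assumes "\<gamma> + QM_quotient M k l R + \<mu>^2 \<le> Vpot M k l x"
  shows "exp (2 * \<mu> * (x1 - x)) * ((deriv R x - \<mu> * R x)^2 + \<gamma> * (R x)^2) \<le> agmon_integrand M k l R \<mu> x1 x"
  unfolding agmon_integrand_def using assms by (intro mult_left_mono) (auto intro!: mult_right_mono)

lemma agmon_integrand_ge_far:
  assumes "M > 0" "k > 0" "l \<ge> 2" "0 \<le> QM_quotient M k l R" "0 \<le> \<mu>" "x1 \<le> x" "x \<in> QM_interval M k"
  shows "- ((QM_quotient M k l R + \<mu>^2) * (R x)^2) \<le> agmon_integrand M k l R \<mu> x1 x"
proof -
  define P where "P = (QM_quotient M k l R + \<mu>^2) * (R x)^2"
  define \<psi> where "\<psi> = exp (2 * \<mu> * (x1 - x))"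
  have "- P \<le> (deriv R x - \<mu> * R x)^2 + (Vpot M k l x - QM_quotient M k l R - \<mu>^2) * (R x)^2"
    using Vpot_bounds(1)[OF assms(1,2,7,3)] unfolding P_def by (simp add: algebra_simps)
  then have "\<psi> * (- P) \<le> agmon_integrand M k l R \<mu> x1 x"
    unfolding agmon_integrand_def \<psi>_def by (intro mult_left_mono) auto
  moreover have "\<psi> * P \<le> P"
    using assms(4-6) unfolding \<psi>_def P_def by (intro mult_left_le_one_le) (auto simp: mult_nonneg_nonpos)
  moreover have "\<psi> * (- P) = - (\<psi> * P)" by simp
  ultimately have "- P \<le> agmon_integrand M k l R \<mu> x1 x" by linarith
  then show ?thesis unfolding P_def .
qed

lemma agmon_integral_ge_near:
  assumes "M > 0" "k > 0" "l \<ge> 2" "R C1_differentiable_on QM_interval M k"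
    and r0: "rstar_3M M k \<le> r0" "r0 \<le> x1" "x1 \<le> pi / 2" and "0 \<le> \<mu>" "0 \<le> \<gamma>"
    and gap: "\<And>x. x \<in> {rstar_3M M k..x1} \<Longrightarrow> \<gamma> + QM_quotient M k l R + \<mu>^2 \<le> Vpot M k l x"
  shows "exp (2 * \<mu> * (x1 - r0)) * integral {rstar_3M M k..r0} (\<lambda>x. (deriv R x - \<mu> * R x)^2 + \<gamma> * (R x)^2)
           \<le> integral {rstar_3M M k..x1} (agmon_integrand M k l R \<mu> x1)"
proof -
  define G where "G = agmon_integrand M k l R \<mu> x1"
  define H where "H = (\<lambda>x. (deriv R x - \<mu> * R x)^2 + \<gamma> * (R x)^2)"
  have G_int: "G integrable_on {c..d}" if "rstar_3M M k \<le> c" "d \<le> pi / 2" for c d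
    unfolding G_def by (rule agmon_integrand_integrable[OF assms(1-4) that])
  have G_gap: "exp (2 * \<mu> * (x1 - x)) * H x \<le> G x" if "x \<in> {rstar_3M M k..x1}" for x
    unfolding G_def H_def by (rule agmon_integrand_ge_gap[OF gap[OF that]])
  have "integral {rstar_3M M k..r0} (\<lambda>x. exp (2 * \<mu> * (x1 - r0)) * H x) \<le> integral {rstar_3M M k..r0} G"
  proof (rule integral_le)
    show "(\<lambda>x. exp (2 * \<mu> * (x1 - r0)) * H x) integrable_on {rstar_3M M k..r0}"
      unfolding H_def using C1_differentiable_imp_continuous_on[OF assms(4)] C1_differentiable_on_deriv(2)[OF assms(4)] r0
      by (intro integrable_continuous_interval) (auto intro!: continuous_intros elim: continuous_on_subset)
    show "G integrable_on {rstar_3M M k..r0}" by (rule G_int) (use r0 in auto)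
    fix x assume x: "x \<in> {rstar_3M M k..r0}"
    have "exp (2 * \<mu> * (x1 - r0)) * H x \<le> exp (2 * \<mu> * (x1 - x)) * H x"
      using x \<open>0 \<le> \<mu>\<close> \<open>0 \<le> \<gamma>\<close> unfolding H_def by (intro mult_right_mono) (auto intro!: mult_left_mono)
    also have "\<dots> \<le> G x" using G_gap x r0 by auto
    finally show "exp (2 * \<mu> * (x1 - r0)) * H x \<le> G x" .
  qed
  moreover have "0 \<le> integral {r0..x1} G"
  proof (rule integral_nonneg)
    show "G integrable_on {r0..x1}" by (rule G_int) (use r0 in auto)
    fix x assume "x \<in> {r0..x1}"
    then have "exp (2 * \<mu> * (x1 - x)) * H x \<le> G x" using G_gap r0 by auto
    moreover have "0 \<le> exp (2 * \<mu> * (x1 - x)) * H x" unfolding H_def using \<open>0 \<le> \<gamma>\<close> by simp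
    ultimately show "0 \<le> G x" by linarith
  qed
  moreover have "integral {rstar_3M M k..r0} G + integral {r0..x1} G = integral {rstar_3M M k..x1} G"
    by (rule Henstock_Kurzweil_Integration.integral_combine[OF r0(1,2) G_int]) (use r0 in auto)
  ultimately show ?thesis unfolding G_def H_def by simp
qed

lemma agmon_estimate:
  assumes "M > 0" "k > 0" "l \<ge> 2" "is_R_QM M k l R"
    and r0: "rstar_3M M k \<le> r0" "r0 \<le> x1" "x1 \<le> pi / 2" and "0 \<le> \<mu>" "0 \<le> \<gamma>"
    and gap: "\<And>x. x \<in> {rstar_3M M k..x1} \<Longrightarrow> \<gamma> + QM_quotient M k l R + \<mu>^2 \<le> Vpot M k l x"
  shows "exp (2 * \<mu> * (x1 - r0)) * integral {rstar_3M M k..r0} (\<lambda>x. (deriv R x - \<mu> * R x)^2 + \<gamma> * (R x)^2)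
           \<le> QM_num M k l R + \<mu>^2 * QM_den M k l R"
proof -
  define q where "q = QM_quotient M k l R"
  define G where "G = agmon_integrand M k l R \<mu> x1"
  have R_C1: "R C1_differentiable_on QM_interval M k"
    using assms(4) unfolding is_R_QM_def QM_admissible_def by auto
  have q: "0 \<le> q" unfolding q_def by (rule is_R_QM_quotient_nonneg[OF assms(1-4)])
  have R2_int: "(\<lambda>x. (R x)^2) integrable_on QM_interval M k"
    using C1_differentiable_imp_continuous_on[OF R_C1] by (intro integrable_continuous_interval continuous_intros)
  have "integral {x1..pi / 2} (\<lambda>x. - ((q + \<mu>^2) * (R x)^2)) \<le> integral {x1..pi / 2} G"
    unfolding G_def q_def using agmon_integrand_ge_far[OF assms(1-3) q[unfolded q_def] \<open>0 \<le> \<mu>\<close>] r0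
    by (intro integral_le integrable_on_subinterval[OF R2_int] agmon_integrand_integrable[OF assms(1-3) R_C1]
        integrable_neg integrable_on_mult_right) auto
  then have far: "- ((q + \<mu>^2) * integral {x1..pi / 2} (\<lambda>x. (R x)^2)) \<le> integral {x1..pi / 2} G" by simp
  have "0 \<le> integral {rstar_3M M k..x1} (\<lambda>x. (R x)^2)"
    by (rule integral_nonneg[OF integrable_on_subinterval[OF R2_int]]) (use r0 in auto)
  then have "integral {x1..pi / 2} (\<lambda>x. (R x)^2) \<le> integral (QM_interval M k) (\<lambda>x. (R x)^2)"
    using Henstock_Kurzweil_Integration.integral_combine[OF order_trans[OF r0(1,2)] r0(3) R2_int] by simp
  then have "(q + \<mu>^2) * integral {x1..pi / 2} (\<lambda>x. (R x)^2) \<le> (q + \<mu>^2) * integral (QM_interval M k) (\<lambda>x. (R x)^2)"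
    using q by (simp add: mult_left_mono)
  moreover have "q * QM_den_boundary_coeff M l * (R (pi / 2))^2 \<le> (q + \<mu>^2) * (QM_den_boundary_coeff M l * (R (pi / 2))^2)"
    using QM_boundary_coeff_bounds(3)[OF assms(1-3)] by (simp add: mult_right_mono)
  moreover have "QM_num M k l R + \<mu>^2 * QM_den M k l R
      = (q + \<mu>^2) * integral (QM_interval M k) (\<lambda>x. (R x)^2) + (q + \<mu>^2) * (QM_den_boundary_coeff M l * (R (pi / 2))^2)"
    unfolding is_R_QM_num_eq[OF assms(1-4)] q_def[symmetric] QM_den_eq by (simp add: algebra_simps)
  moreover have "integral (QM_interval M k) G = integral {rstar_3M M k..x1} G + integral {x1..pi / 2} G"
    unfolding G_def using r0
    by (intro Henstock_Kurzweil_Integration.integral_combine[symmetric] agmon_integrand_integrable[OF assms(1-3) R_C1]) auto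
  ultimately show ?thesis
    using agmon_integral_ge_near[OF assms(1-3) R_C1 r0 assms(8,9) gap] far
      agmon_integral_le[OF assms(1-4,8) r0(3)] unfolding G_def q_def by linarith
qed

section \<open>Comparison with the energy\<close>

lemma C1_vanishing_endpoint_sq_le:
  fixes f :: "real \<Rightarrow> real"
  assumes "a \<le> b" "f C1_differentiable_on {a..b}" "f a = 0"
  shows "(f b)^2 \<le> integral {a..b} (\<lambda>x. (f x)^2 + (deriv f x)^2)"
proof -
  note df = C1_differentiable_on_deriv[OF assms(2)]
  have "((\<lambda>x. 2 * (f x * deriv f x)) has_integral (f b)^2 - (f a)^2) {a..b}"
  proof (rule fundamental_theorem_of_calculus[OF assms(1)])
    fix x assume "x \<in> {a..b}"
    from DERIV_mult[OF df(1)[OF this] df(1)[OF this]]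
    have "((\<lambda>x. (f x)^2) has_real_derivative 2 * (f x * deriv f x)) (at x)"
      by (simp add: power2_eq_square algebra_simps)
    then show "((\<lambda>x. (f x)^2) has_vector_derivative 2 * (f x * deriv f x)) (at x within {a..b})"
      by (simp add: has_real_derivative_iff_has_vector_derivative has_vector_derivative_at_within)
  qed
  then have "integral {a..b} (\<lambda>x. 2 * (f x * deriv f x)) = (f b)^2 - (f a)^2" by (rule integral_unique)
  then have "(f b)^2 = integral {a..b} (\<lambda>x. 2 * (f x * deriv f x))" using assms(3) by simp
  also have "\<dots> \<le> integral {a..b} (\<lambda>x. (f x)^2 + (deriv f x)^2)"
  proof (rule integral_le)
    show "(\<lambda>x. 2 * (f x * deriv f x)) integrable_on {a..b}" using \<open>(_ has_integral _) _\<close> by blast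
    show "(\<lambda>x. (f x)^2 + (deriv f x)^2) integrable_on {a..b}"
      using C1_differentiable_imp_continuous_on[OF assms(2)] df(2)
      by (intro integrable_continuous_interval continuous_intros)
    show "2 * (f x * deriv f x) \<le> (f x)^2 + (deriv f x)^2" for x
      using sum_squares_ge_zero[of "f x - deriv f x" 0] by (simp add: power2_eq_square algebra_simps)
  qed
  finally show ?thesis .
qed

lemma energy_nonneg:
  assumes "R C1_differentiable_on QM_interval M k"
  shows "0 \<le> integral (QM_interval M k) (\<lambda>x. (deriv R x)^2 + real (l * (l + 1)) * (R x)^2)"
  using C1_differentiable_imp_continuous_on[OF assms] C1_differentiable_on_deriv(2)[OF assms]
  by (intro integral_nonneg integrable_continuous_interval continuous_intros) auto

lemma energy_trace_le:
  assumes "M > 0" "k > 0" "l \<ge> 1" "R C1_differentiable_on QM_interval M k" "R (rstar_3M M k) = 0"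
  shows "(R (pi / 2))^2 \<le> integral (QM_interval M k) (\<lambda>x. (deriv R x)^2 + real (l * (l + 1)) * (R x)^2)"
proof -
  note cont = C1_differentiable_imp_continuous_on[OF assms(4)] C1_differentiable_on_deriv(2)[OF assms(4)]
  have int: "(\<lambda>x. (deriv R x)^2 + c * (R x)^2) integrable_on QM_interval M k" for c
    using cont by (intro integrable_continuous_interval continuous_intros)
  have "1 \<le> l * (l + 1)" using assms(3) by (simp add: Suc_le_eq)
  then have "1 \<le> real (l * (l + 1))" by (metis of_nat_1 of_nat_le_iff)
  have "(R (pi / 2))^2 \<le> integral (QM_interval M k) (\<lambda>x. (deriv R x)^2 + (R x)^2)"
    using C1_vanishing_endpoint_sq_le[OF less_imp_le[OF rstar_3M_less_pi_half[OF assms(1,2)]] assms(4,5)]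
    by (simp add: add.commute)
  also have "\<dots> \<le> integral (QM_interval M k) (\<lambda>x. (deriv R x)^2 + real (l * (l + 1)) * (R x)^2)"
    using int[of 1, simplified] int \<open>1 \<le> real (l * (l + 1))\<close>
    by (intro integral_le) (auto simp: mult_le_cancel_right1)
  finally show ?thesis .
qed

lemma QM_num_le_energy:
  assumes "M > 0" "k > 0" "l \<ge> 2" "R C1_differentiable_on QM_interval M k" "R (rstar_3M M k) = 0"
  defines "E \<equiv> integral (QM_interval M k) (\<lambda>x. (deriv R x)^2 + real (l * (l + 1)) * (R x)^2)"
  shows "QM_num M k l R \<le> (1 + w_max M k + 2 * M * k^2) * E"
proof -
  define L where "L = real (l * (l + 1))"
  define W where "W = w_max M k"
  have L: "6 \<le> L" unfolding L_def by (rule L_ge_6[OF assms(3)])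
  have W: "0 < W" unfolding W_def by (rule w_max_pos[OF assms(1,2)])
  have "integral (QM_interval M k) (\<lambda>x. (deriv R x)^2 + Vpot M k l x * (R x)^2)
      \<le> integral (QM_interval M k) (\<lambda>x. (1 + W) * ((deriv R x)^2 + L * (R x)^2))"
  proof (rule integral_le)
    show "(\<lambda>x. (deriv R x)^2 + Vpot M k l x * (R x)^2) integrable_on QM_interval M k"
      using QM_num_integrand_integrable[OF assms(1-4,4) order_refl order_refl] by (simp add: power2_eq_square)
    show "(\<lambda>x. (1 + W) * ((deriv R x)^2 + L * (R x)^2)) integrable_on QM_interval M k"
      using C1_differentiable_imp_continuous_on[OF assms(4)] C1_differentiable_on_deriv(2)[OF assms(4)]
      by (intro integrable_continuous_interval continuous_intros)
    fix x assume "x \<in> QM_interval M k"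
    from Vpot_bounds(3)[OF assms(1,2) this assms(3)]
    have "Vpot M k l x * (R x)^2 \<le> ((1 + W) * L) * (R x)^2"
      using L unfolding L_def[symmetric] W_def[symmetric] by (intro mult_right_mono) (auto simp: algebra_simps)
    moreover have "(deriv R x)^2 \<le> (1 + W) * (deriv R x)^2" using W by (simp add: algebra_simps)
    ultimately have "(deriv R x)^2 + Vpot M k l x * (R x)^2
        \<le> (1 + W) * (deriv R x)^2 + ((1 + W) * L) * (R x)^2" by linarith
    then show "(deriv R x)^2 + Vpot M k l x * (R x)^2 \<le> (1 + W) * ((deriv R x)^2 + L * (R x)^2)"
      by (simp add: algebra_simps)
  qed
  also have "\<dots> = (1 + W) * E" unfolding E_def L_def by simp
  finally have bulk: "integral (QM_interval M k) (\<lambda>x. (deriv R x)^2 + Vpot M k l x * (R x)^2) \<le> (1 + W) * E" .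
  have "QM_num_boundary_coeff M k l * (R (pi / 2))^2 \<le> 2 * M * k^2 * (R (pi / 2))^2"
    using QM_boundary_coeff_bounds(2)[OF assms(1-3)] by (simp add: mult_right_mono)
  also have "\<dots> \<le> 2 * M * k^2 * E"
    using energy_trace_le[OF assms(1,2) _ assms(4,5), of l] assms(1,3) unfolding E_def by (simp add: mult_left_mono)
  finally show ?thesis
    using bulk unfolding QM_num_def QM_num_boundary_coeff_def[symmetric] W_def by (simp add: algebra_simps)
qed

lemma QM_den_le_energy:
  assumes "M > 0" "k > 0" "l \<ge> 2" "R C1_differentiable_on QM_interval M k" "R (rstar_3M M k) = 0"
  defines "E \<equiv> integral (QM_interval M k) (\<lambda>x. (deriv R x)^2 + real (l * (l + 1)) * (R x)^2)"
  shows "real (l * (l + 1)) * QM_den M k l R \<le> (1 + 3 * M) * E"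
proof -
  define L where "L = real (l * (l + 1))"
  have R2: "(\<lambda>x. (R x)^2) integrable_on QM_interval M k"
    using C1_differentiable_imp_continuous_on[OF assms(4)] by (intro integrable_continuous_interval continuous_intros)
  have "integral (QM_interval M k) (\<lambda>x. L * (R x)^2) \<le> E"
    unfolding E_def L_def[symmetric]
    using integrable_on_mult_right[OF R2, of L] C1_differentiable_imp_continuous_on[OF assms(4)]
      C1_differentiable_on_deriv(2)[OF assms(4)]
    by (intro integral_le integrable_continuous_interval) (auto intro!: continuous_intros)
  then have "L * integral (QM_interval M k) (\<lambda>x. (R x)^2) \<le> E" by simp
  moreover have "L * QM_den_boundary_coeff M l * (R (pi / 2))^2 \<le> 3 * M * (R (pi / 2))^2"
    using QM_boundary_coeff_bounds(4)[OF assms(1-3)] unfolding L_def by (simp add: mult_right_mono)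
  moreover have "3 * M * (R (pi / 2))^2 \<le> 3 * M * E"
    using energy_trace_le[OF assms(1,2) _ assms(4,5), of l] assms(1,3) unfolding E_def by (simp add: mult_left_mono)
  ultimately show ?thesis unfolding QM_den_eq L_def[symmetric] by (simp add: algebra_simps)
qed

lemma energy_density_le_agmon_density:
  fixes u v \<epsilon> L \<mu> :: real
  assumes "\<epsilon> > 0" "L \<ge> 0" "\<mu>^2 = \<epsilon> * L / 4"
  shows "u^2 + L * v^2 \<le> (3 + 2 / \<epsilon>) * ((u - \<mu> * v)^2 + \<epsilon> * L / 2 * v^2)"
proof -
  define U where "U = (u - \<mu> * v)^2"
  define K where "K = 3 + 2 / \<epsilon>"
  have "u^2 \<le> 2 * U + 2 * \<mu>^2 * v^2"
    unfolding U_def using sum_squares_ge_zero[of "u - 2 * \<mu> * v" 0] by (simp add: power2_eq_square algebra_simps)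
  moreover have "2 * U \<le> K * U" unfolding K_def U_def using assms(1) by (intro mult_right_mono) auto
  moreover have "(2 * \<mu>^2 + L) * v^2 \<le> (K * (\<epsilon> * L / 2)) * v^2"
    unfolding K_def using assms by (intro mult_right_mono) (auto simp: field_simps)
  moreover have "K * (U + \<epsilon> * L / 2 * v^2) = K * U + (K * (\<epsilon> * L / 2)) * v^2"
    by (simp add: algebra_simps)
  moreover have "(2 * \<mu>^2 + L) * v^2 = 2 * \<mu>^2 * v^2 + L * v^2" by (simp add: algebra_simps)
  ultimately show ?thesis unfolding K_def[symmetric] U_def[symmetric] by linarith
qed

section \<open>Exponential smallness near the photon sphere\<close>

lemma Vpot_ge_quotient_with_gap:
  assumes "M > 0" "k > 0" "l \<ge> 2" "x \<in> QM_interval M k" "\<epsilon> > 0"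
    and "k^2 + 4 * \<epsilon> \<le> wstar M k x"
    and "q \<le> (k^2 + 2 * \<epsilon>) * real (l * (l + 1)) + C"
    and "2 * w_max M k + C \<le> \<epsilon> * real (l * (l + 1))"
  shows "\<epsilon> * real (l * (l + 1)) / 2 + q + \<epsilon> * real (l * (l + 1)) / 4 \<le> Vpot M k l x"
proof -
  define L where "L = real (l * (l + 1))"
  have L: "6 \<le> L" unfolding L_def by (rule L_ge_6[OF assms(3)])
  have "(k^2 + 4 * \<epsilon>) * L \<le> wstar M k x * L" using assms(6) L by (intro mult_right_mono) auto
  with Vpot_bounds(4)[OF assms(1,2,4,3), folded L_def]
  have "(k^2 + 4 * \<epsilon>) * L - 2 * w_max M k \<le> Vpot M k l x" by linarith
  moreover have "(k^2 + 4 * \<epsilon>) * L = k^2 * L + 4 * (\<epsilon> * L)" "(k^2 + 2 * \<epsilon>) * L = k^2 * L + 2 * (\<epsilon> * L)"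
    by (simp_all add: algebra_simps)
  moreover have "0 \<le> \<epsilon> * L" using assms(5) L by simp
  ultimately show ?thesis using assms(7,8) unfolding L_def[symmetric] by linarith
qed

lemma QM_num_plus_den_le_energy:
  assumes "M > 0" "k > 0" "l \<ge> 2" "R C1_differentiable_on QM_interval M k" "R (rstar_3M M k) = 0" "\<epsilon> \<ge> 0"
  defines "E \<equiv> integral (QM_interval M k) (\<lambda>x. (deriv R x)^2 + real (l * (l + 1)) * (R x)^2)"
  shows "QM_num M k l R + \<epsilon> * real (l * (l + 1)) / 4 * QM_den M k l R
           \<le> (1 + w_max M k + 2 * M * k^2 + \<epsilon> / 4 * (1 + 3 * M)) * E"
proof -
  have "\<epsilon> * real (l * (l + 1)) / 4 * QM_den M k l R = \<epsilon> / 4 * (real (l * (l + 1)) * QM_den M k l R)"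
    by simp
  also have "\<dots> \<le> \<epsilon> / 4 * ((1 + 3 * M) * E)"
    using QM_den_le_energy[OF assms(1-5)] assms(6) unfolding E_def by (intro mult_left_mono) auto
  finally have "\<epsilon> * real (l * (l + 1)) / 4 * QM_den M k l R \<le> \<epsilon> / 4 * ((1 + 3 * M) * E)" .
  moreover have "(1 + w_max M k + 2 * M * k^2 + \<epsilon> / 4 * (1 + 3 * M)) * E
      = (1 + w_max M k + 2 * M * k^2) * E + \<epsilon> / 4 * ((1 + 3 * M) * E)" by (simp add: algebra_simps)
  ultimately show ?thesis using QM_num_le_energy[OF assms(1-5)] unfolding E_def by linarith
qed

lemma energy_le_agmon_integral:
  assumes "R C1_differentiable_on QM_interval M k" "rstar_3M M k \<le> r0" "r0 \<le> pi / 2"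
    "\<epsilon> > 0" "L \<ge> 0" "\<mu>^2 = \<epsilon> * L / 4"
  shows "integral {rstar_3M M k..r0} (\<lambda>x. (deriv R x)^2 + L * (R x)^2)
    \<le> (3 + 2 / \<epsilon>) * integral {rstar_3M M k..r0} (\<lambda>x. (deriv R x - \<mu> * R x)^2 + \<epsilon> * L / 2 * (R x)^2)"
proof -
  have "integral {rstar_3M M k..r0} (\<lambda>x. (deriv R x)^2 + L * (R x)^2)
      \<le> integral {rstar_3M M k..r0} (\<lambda>x. (3 + 2 / \<epsilon>) * ((deriv R x - \<mu> * R x)^2 + \<epsilon> * L / 2 * (R x)^2))"
  proof (rule integral_le)
    have sub: "{rstar_3M M k..r0} \<subseteq> QM_interval M k" using assms(3) by auto
    note cont = C1_differentiable_imp_continuous_on[OF assms(1)] C1_differentiable_on_deriv(2)[OF assms(1)]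
    have "continuous_on (QM_interval M k) (\<lambda>x. (deriv R x)^2 + L * (R x)^2)"
      "continuous_on (QM_interval M k) (\<lambda>x. (3 + 2 / \<epsilon>) * ((deriv R x - \<mu> * R x)^2 + \<epsilon> * L / 2 * (R x)^2))"
      using cont by (auto intro!: continuous_intros)
    then show "(\<lambda>x. (deriv R x)^2 + L * (R x)^2) integrable_on {rstar_3M M k..r0}"
      "(\<lambda>x. (3 + 2 / \<epsilon>) * ((deriv R x - \<mu> * R x)^2 + \<epsilon> * L / 2 * (R x)^2)) integrable_on {rstar_3M M k..r0}"
      using sub by (auto intro!: integrable_continuous_interval elim: continuous_on_subset)
  qed (rule energy_density_le_agmon_density[OF assms(4-6)])
  then show ?thesis by simp
qed

lemma is_R_QM_energy_decay:
  assumes "M > 0" "k > 0" "l \<ge> 2" "is_R_QM M k l R"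
    and r0: "rstar_3M M k \<le> r0" "r0 < x1" "x1 < pi / 2" and "\<epsilon> > 0"
    and w_gap: "\<And>x. x \<in> {rstar_3M M k..x1} \<Longrightarrow> k^2 + 4 * \<epsilon> \<le> wstar M k x"
    and eigenvalue: "QM_quotient M k l R \<le> (k^2 + 2 * \<epsilon>) * real (l * (l + 1)) + C"
    and large_l: "2 * w_max M k + C \<le> \<epsilon> * real (l * (l + 1))"
  shows "integral {rstar_3M M k..r0} (\<lambda>x. (deriv R x)^2 + real (l * (l + 1)) * (R x)^2)
    \<le> (3 + 2 / \<epsilon>) * (1 + w_max M k + 2 * M * k^2 + \<epsilon> / 4 * (1 + 3 * M))
       * exp (- (sqrt \<epsilon> * (x1 - r0)) * real l)
       * integral (QM_interval M k) (\<lambda>x. (deriv R x)^2 + real (l * (l + 1)) * (R x)^2)"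
proof -
  define L where "L = real (l * (l + 1))"
  define \<mu> where "\<mu> = sqrt (\<epsilon> * L) / 2"
  define C4 where "C4 = 1 + w_max M k + 2 * M * k^2 + \<epsilon> / 4 * (1 + 3 * M)"
  define E where "E = integral (QM_interval M k) (\<lambda>x. (deriv R x)^2 + L * (R x)^2)"
  define J where "J = integral {rstar_3M M k..r0} (\<lambda>x. (deriv R x - \<mu> * R x)^2 + \<epsilon> * L / 2 * (R x)^2)"
  have L: "6 \<le> L" unfolding L_def by (rule L_ge_6[OF assms(3)])
  have \<mu>: "0 \<le> \<mu>" "\<mu>^2 = \<epsilon> * L / 4" unfolding \<mu>_def using assms(8) L by (simp_all add: power_divide)
  have R_C1: "R C1_differentiable_on QM_interval M k" and R0: "R (rstar_3M M k) = 0"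
    using assms(4) unfolding is_R_QM_def QM_admissible_def by auto
  have "exp (2 * \<mu> * (x1 - r0)) * J \<le> QM_num M k l R + \<mu>^2 * QM_den M k l R"
    unfolding J_def
  proof (rule agmon_estimate[OF assms(1-4) r0(1) less_imp_le[OF r0(2)] less_imp_le[OF r0(3)] \<mu>(1)])
    show "0 \<le> \<epsilon> * L / 2" using assms(8) L by simp
    fix x assume x: "x \<in> {rstar_3M M k..x1}"
    then have "x \<in> QM_interval M k" using r0 by auto
    from Vpot_ge_quotient_with_gap[OF assms(1-3) this assms(8) w_gap[OF x] eigenvalue large_l]
    show "\<epsilon> * L / 2 + QM_quotient M k l R + \<mu>^2 \<le> Vpot M k l x" unfolding \<mu>(2) L_def .
  qed
  also have "\<dots> \<le> C4 * E" unfolding \<mu>(2) C4_def E_def L_def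
    by (rule QM_num_plus_den_le_energy[OF assms(1-3) R_C1 R0]) (use assms(8) in simp)
  finally have "J \<le> C4 * E / exp (2 * \<mu> * (x1 - r0))" by (simp add: pos_le_divide_eq mult.commute)
  then have J: "J \<le> exp (- (2 * \<mu> * (x1 - r0))) * (C4 * E)" by (simp add: exp_minus divide_inverse mult.commute)
  have "sqrt \<epsilon> * real l \<le> 2 * \<mu>"
  proof -
    have "(real l)^2 \<le> L" unfolding L_def by (simp add: power2_eq_square)
    then have "sqrt \<epsilon> * real l \<le> sqrt \<epsilon> * sqrt L" using assms(8) by (intro mult_left_mono real_le_rsqrt) auto
    then show ?thesis unfolding \<mu>_def by (simp add: real_sqrt_mult)
  qed
  then have "sqrt \<epsilon> * real l * (x1 - r0) \<le> 2 * \<mu> * (x1 - r0)" using r0 by (intro mult_right_mono) auto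
  then have "exp (- (2 * \<mu> * (x1 - r0))) \<le> exp (- (sqrt \<epsilon> * (x1 - r0)) * real l)"
    by (simp add: algebra_simps)
  moreover have "0 \<le> C4 * E"
    using w_max_pos[OF assms(1,2)] assms(1,8) energy_nonneg[OF R_C1, of l]
    unfolding C4_def E_def L_def by (intro mult_nonneg_nonneg add_nonneg_nonneg) auto
  ultimately have J_decay: "J \<le> exp (- (sqrt \<epsilon> * (x1 - r0)) * real l) * (C4 * E)"
    using J by (meson mult_right_mono order_trans)
  have "integral {rstar_3M M k..r0} (\<lambda>x. (deriv R x)^2 + L * (R x)^2) \<le> (3 + 2 / \<epsilon>) * J"
    unfolding J_def by (rule energy_le_agmon_integral[OF R_C1 r0(1) _ assms(8) _ \<mu>(2)]) (use r0 L in auto)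
  also have "\<dots> \<le> (3 + 2 / \<epsilon>) * (exp (- (sqrt \<epsilon> * (x1 - r0)) * real l) * (C4 * E))"
    using J_decay assms(8) by (intro mult_left_mono) auto
  also have "\<dots> = (3 + 2 / \<epsilon>) * C4 * exp (- (sqrt \<epsilon> * (x1 - r0)) * real l) * E" by (simp only: mult_ac)
  finally show ?thesis unfolding C4_def E_def L_def .
qed

text \<open>The constant \<open>\<epsilon>\<close> is chosen so that \<open>w \<ge> k\<^sup>2 + 4\<epsilon>\<close> up to some \<open>x\<^sub>1 > r\<^sub>0\<close>, which keeps
  the potential above the eigenvalue there by a margin proportional to \<open>\<ell>(\<ell>+1)\<close>.\<close>

lemma is_R_QM_energy_decay_eventually:
  assumes "M > 0" "k > 0" "rstar_3M M k < r0" "r0 < pi / 2"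
  obtains K c L0 where "K > 0" "c > 0"
    "\<And>l R. L0 \<le> l \<Longrightarrow> is_R_QM M k l R \<Longrightarrow>
       integral {rstar_3M M k..r0} (\<lambda>x. (deriv R x)^2 + real (l * (l + 1)) * (R x)^2)
       \<le> K * exp (- c * real l) * integral (QM_interval M k) (\<lambda>x. (deriv R x)^2 + real (l * (l + 1)) * (R x)^2)"
proof -
  obtain R1 where R1: "3 * M \<le> R1" "r0 < rstar M k R1" using ex_rstar_greater[OF assms(1,2,4)] .
  define x1 where "x1 = rstar M k R1"
  define \<epsilon> where "\<epsilon> = 1 / (12 * R1^2)"
  have \<epsilon>: "\<epsilon> > 0" unfolding \<epsilon>_def using R1 assms(1) by simp
  have w_gap: "k^2 + 4 * \<epsilon> \<le> wstar M k x" if "x \<in> {rstar_3M M k..x1}" for x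
    using wstar_ge_below_rstar[OF assms(1,2) _ _ R1(1)] that unfolding x1_def \<epsilon>_def by auto
  obtain C where C: "\<And>l R. l \<ge> 2 \<Longrightarrow> is_R_QM M k l R \<Longrightarrow>
      QM_quotient M k l R \<le> (k^2 + 2 * \<epsilon>) * real (l * (l + 1)) + C"
    using QM_quotient_minimiser_upper_bound[OF assms(1,2) \<epsilon>] by blast
  obtain n :: nat where n: "(2 * w_max M k + C) / \<epsilon> \<le> real n" using real_arch_simple by blast
  show ?thesis
  proof (rule that[of "(3 + 2 / \<epsilon>) * (1 + w_max M k + 2 * M * k^2 + \<epsilon> / 4 * (1 + 3 * M))"
        "sqrt \<epsilon> * (x1 - r0)" "max 2 n"])
    show "0 < (3 + 2 / \<epsilon>) * (1 + w_max M k + 2 * M * k^2 + \<epsilon> / 4 * (1 + 3 * M))"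
      using \<epsilon> w_max_pos[OF assms(1,2)] assms(1) by (intro mult_pos_pos) (auto intro!: add_pos_nonneg)
    show "0 < sqrt \<epsilon> * (x1 - r0)" using \<epsilon> R1(2) unfolding x1_def by simp
    fix l R assume l: "max 2 n \<le> l" and R: "is_R_QM M k l R"
    have l2: "2 \<le> l" using l by simp
    have "n \<le> l * (l + 1)" using l by (simp add: distrib_left le_add_same_cancel2 trans_le_add2)
    then have "(2 * w_max M k + C) / \<epsilon> \<le> real (l * (l + 1))" using n by linarith
    then have "2 * w_max M k + C \<le> \<epsilon> * real (l * (l + 1))" using \<epsilon> by (simp add: pos_divide_le_eq mult.commute)
    from is_R_QM_energy_decay[OF assms(1,2) l2 R less_imp_le[OF assms(3)] R1(2)[folded x1_def]
        rstar_less_pi_half[OF assms(1,2) R1(1), folded x1_def] \<epsilon> w_gap C[OF l2 R] this]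
    show "integral {rstar_3M M k..r0} (\<lambda>x. (deriv R x)^2 + real (l * (l + 1)) * (R x)^2)
       \<le> (3 + 2 / \<epsilon>) * (1 + w_max M k + 2 * M * k^2 + \<epsilon> / 4 * (1 + 3 * M)) * exp (- (sqrt \<epsilon> * (x1 - r0)) * real l)
         * integral (QM_interval M k) (\<lambda>x. (deriv R x)^2 + real (l * (l + 1)) * (R x)^2)" .
  qed
qed

lemma exp_decay_absorb_constant:
  fixes K c :: real
  assumes "K > 0" "c > 0"
  obtains C where "C > 0" "\<And>t. 0 \<le> t \<Longrightarrow> K * exp (- c * t) \<le> C * exp (- t / C)"
proof
  define C where "C = max K (1 / c)"
  show "C > 0" unfolding C_def using assms by auto
  fix t :: real assume "0 \<le> t"
  have "1 / C \<le> c" unfolding C_def using assms by (simp add: divide_le_eq max_def field_simps)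
  from mult_right_mono[OF this \<open>0 \<le> t\<close>] have "t / C \<le> c * t" by simp
  then have "exp (- c * t) \<le> exp (- t / C)" by simp
  then show "K * exp (- c * t) \<le> C * exp (- t / C)"
    unfolding C_def using assms by (intro mult_mono) auto
qed

theorem lemma4p13:
  fixes M k r0 :: real
  assumes "M > 0" and "k > 0"
    and "rstar M k (3 * M) < r0" and "r0 < pi / 2"
  shows "\<exists>C > 0. \<exists>L0 :: nat. \<forall>l \<ge> L0. \<forall>R. is_R_QM M k l R \<longrightarrow>
           integral {rstar M k (3 * M) .. r0}
             (\<lambda>x. (deriv R x)^2 + real (l * (l + 1)) * (R x)^2)
           \<le> C * exp (- real l / C) *
             integral {rstar M k (3 * M) .. pi / 2}
             (\<lambda>x. (deriv R x)^2 + real (l * (l + 1)) * (R x)^2)"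
proof -
  obtain K c L0 where K: "K > 0" "c > 0" and decay: "\<And>l R. L0 \<le> l \<Longrightarrow> is_R_QM M k l R \<Longrightarrow>
       integral {rstar_3M M k..r0} (\<lambda>x. (deriv R x)^2 + real (l * (l + 1)) * (R x)^2)
       \<le> K * exp (- c * real l) * integral (QM_interval M k) (\<lambda>x. (deriv R x)^2 + real (l * (l + 1)) * (R x)^2)"
    using is_R_QM_energy_decay_eventually[OF assms] by blast
  obtain C where C: "C > 0" "\<And>t. 0 \<le> t \<Longrightarrow> K * exp (- c * t) \<le> C * exp (- t / C)"
    using exp_decay_absorb_constant[OF K] by blast
  show ?thesis
  proof (intro exI[of _ C] conjI C(1) exI[of _ L0] allI impI)
    fix l R assume l: "L0 \<le> l" and R: "is_R_QM M k l R"
    have "0 \<le> integral (QM_interval M k) (\<lambda>x. (deriv R x)^2 + real (l * (l + 1)) * (R x)^2)"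
      using R energy_nonneg unfolding is_R_QM_def QM_admissible_def by blast
    from order_trans[OF decay[OF l R] mult_right_mono[OF C(2)[OF of_nat_0_le_iff] this]]
    show "integral {rstar M k (3 * M) .. r0} (\<lambda>x. (deriv R x)^2 + real (l * (l + 1)) * (R x)^2)
           \<le> C * exp (- real l / C) * integral {rstar M k (3 * M) .. pi / 2}
             (\<lambda>x. (deriv R x)^2 + real (l * (l + 1)) * (R x)^2)" .
  qed
qed
end
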